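(* For a general digraph $G=(V,A)$ with $m=|A|$ and each neighborhood $\Phi(X,k)\in\{\Phi^{\mathrm{incl}}(X,k),\Phi^{\mathrm{excl}}(X,k),\Phi^{\mathrm{sym}}(X,k)\}$, the problem \textsc{Rec Rob SP} under $\mathcal{U}(\Gamma^c)$ admits a compact mixed integer programming formulation, i.e. a MIP whose number of variables and constraints is polynomial in $|V|$ and $m$ and whose optimal value equals the optimal value of \textsc{Rec Rob SP}, with an optimal first-stage path readable from an optimal MIP solution.
   Context: Given a digraph $G=(V,A)$ with distinguished nodes $s,t$, $\Phi$ is the set of simple $s$-$t$ paths, each identified with its arc set. For $X\in\Phi$, integer $k\ge0$: $\Phi^{\mathrm{incl}}(X,k)=\{Y\in\Phi:|Y\setminus X|\le k\}$, $\Phi^{\mathrm{excl}}(X,k)=\{Y\in\Phi:|X\setminus Y|\le k\}$, $\Phi^{\mathrm{sym}}(X,k)=\{Y\in\Phi:|(Y\setminus X)\cup(X\setminus Y)|\le k\}$. Given first-stage costs $C_e\ge0$, nominal costs $\hat c_e\ge0$, deviations $\Delta_e\ge0$ and budget $\Gamma^c\ge0$, the continuous budgeted uncertainty set is $\mathcal{U}(\Gamma^c)=\{(c_e^S)_{e\in A}: c_e^S\in[\hat c_e,\hat c_e+\Delta_e],\ \sum_{e\in A}(c^S_e-\hat c_e)\le\Gamma^c\}$. \textsc{Rec Rob SP} under a scenario set $\mathbb{U}$ is $\min_{X\in\Phi}\big(\sum_{e\in X}C_e+\max_{S\in\mathbb{U}}\min_{Y\in\Phi(X,k)}\sum_{e\in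 Y}c^S_e\big)$. *)

theory Defs
  imports Complex_Main
begin

type_synonym arc = "nat \<times> nat"

definition walk_arcs :: "nat list \<Rightarrow> arc set" where
  "walk_arcs vs = set (zip vs (tl vs))"

definition is_simple_path :: "arc set \<Rightarrow> nat \<Rightarrow> nat \<Rightarrow> nat list \<Rightarrow> bool" where
  "is_simple_path A s t vs \<longleftrightarrow> vs \<noteq> [] \<and> hd vs = s \<and> last vs = t \<and> distinct vs
     \<and> walk_arcs vs \<subseteq> A"

definition Paths :: "arc set \<Rightarrow> nat \<Rightarrow> nat \<Rightarrow> arc set set" where
  "Paths A s t = {walk_arcs vs | vs. is_simple_path A s t vs}"

datatype nbh = Incl | Excl | Sym

definition Nbh :: "nbh \<Rightarrow> arc set \<Rightarrow> nat \<Rightarrow> nat \<Rightarrow> arc set \<Rightarrow> nat \<Rightarrow> arc set set" where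
  "Nbh nb A s t X k = (case nb of
      Incl \<Rightarrow> {Y \<in> Paths A s t. card (Y - X) \<le> k}
    | Excl \<Rightarrow> {Y \<in> Paths A s t. card (X - Y) \<le> k}
    | Sym  \<Rightarrow> {Y \<in> Paths A s t. card ((Y - X) \<union> (X - Y)) \<le> k})"

definition Ucont :: "arc set \<Rightarrow> (arc \<Rightarrow> real) \<Rightarrow> (arc \<Rightarrow> real) \<Rightarrow> real \<Rightarrow> (arc \<Rightarrow> real) set" where
  "Ucont A ch D G = {c. (\<forall>e\<in>A. ch e \<le> c e \<and> c e \<le> ch e + D e) \<and> (\<forall>e. e \<notin> A \<longrightarrow> c e = ch e)
       \<and> (\<Sum>e\<in>A. c e - ch e) \<le> G}"

definition rr_obj :: "nbh \<Rightarrow> arc set \<Rightarrow> nat \<Rightarrow> nat \<Rightarrow> nat \<Rightarrow> (arc \<Rightarrow> real) \<Rightarrow> (arc \<Rightarrow> real)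
    \<Rightarrow> (arc \<Rightarrow> real) \<Rightarrow> real \<Rightarrow> arc set \<Rightarrow> real" where
  "rr_obj nb A s t k C ch D G X =
     (\<Sum>e\<in>X. C e) + (SUP c \<in> Ucont A ch D G. Min ((\<lambda>Y. \<Sum>e\<in>Y. c e) ` Nbh nb A s t X k))"

definition rr_opt :: "nbh \<Rightarrow> arc set \<Rightarrow> nat \<Rightarrow> nat \<Rightarrow> nat \<Rightarrow> (arc \<Rightarrow> real) \<Rightarrow> (arc \<Rightarrow> real)
    \<Rightarrow> (arc \<Rightarrow> real) \<Rightarrow> real \<Rightarrow> real" where
  "rr_opt nb A s t k C ch D G = Min (rr_obj nb A s t k C ch D G ` Paths A s t)"

record mip =
  nvars :: nat
  ivars :: "nat set"
  mobj :: "nat \<Rightarrow> real"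
  mcons :: "((nat \<Rightarrow> real) \<times> real) list"

definition mip_val :: "mip \<Rightarrow> (nat \<Rightarrow> real) \<Rightarrow> real" where
  "mip_val M x = (\<Sum>i<nvars M. mobj M i * x i)"

definition mip_feasible :: "mip \<Rightarrow> (nat \<Rightarrow> real) \<Rightarrow> bool" where
  "mip_feasible M x \<longleftrightarrow> (\<forall>i\<in>ivars M. x i \<in> \<int>)
     \<and> (\<forall>(a, b)\<in>set (mcons M). (\<Sum>i<nvars M. a i * x i) \<le> b)"

definition mip_optimal :: "mip \<Rightarrow> (nat \<Rightarrow> real) \<Rightarrow> bool" where
  "mip_optimal M x \<longleftrightarrow> mip_feasible M x \<and> (\<forall>y. mip_feasible M y \<longrightarrow> mip_val M x \<le> mip_val M y)"

text \<open>A coefficient that is an affine function of the cost data (C, c-hat, Delta, Gamma):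
  constant, per-arc weights for C, c-hat, Delta, and a weight for Gamma.\<close>
type_synonym aff = "real \<times> (arc \<Rightarrow> real) \<times> (arc \<Rightarrow> real) \<times> (arc \<Rightarrow> real) \<times> real"

fun aff_eval :: "arc set \<Rightarrow> (arc \<Rightarrow> real) \<Rightarrow> (arc \<Rightarrow> real) \<Rightarrow> (arc \<Rightarrow> real) \<Rightarrow> real \<Rightarrow> aff \<Rightarrow> real" where
  "aff_eval A C ch D G (a0, wC, wh, wd, wg) =
     a0 + (\<Sum>e\<in>A. wC e * C e + wh e * ch e + wd e * D e) + wg * G"

text \<open>A MIP template: variable count, integer variables, objective and constraints whose
  coefficients are affine in the cost data, and an injective assignment of a (readout)
  variable to each arc; the first-stage path is read as the set of arcs whose variable is 1.\<close>
record mip_template =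
  tnvars :: nat
  tivars :: "nat set"
  tobj :: "nat \<Rightarrow> aff"
  tcons :: "((nat \<Rightarrow> aff) \<times> aff) list"
  tidx :: "arc \<Rightarrow> nat"

definition template_size :: "mip_template \<Rightarrow> nat" where
  "template_size T = tnvars T + length (tcons T)"

definition template_wf :: "arc set \<Rightarrow> mip_template \<Rightarrow> bool" where
  "template_wf A T \<longleftrightarrow> tivars T \<subseteq> {..<tnvars T} \<and> inj_on (tidx T) A
     \<and> (\<forall>e\<in>A. tidx T e < tnvars T)"

definition instantiate :: "arc set \<Rightarrow> mip_template \<Rightarrow> (arc \<Rightarrow> real) \<Rightarrow> (arc \<Rightarrow> real)
    \<Rightarrow> (arc \<Rightarrow> real) \<Rightarrow> real \<Rightarrow> mip" where
  "instantiate A T C ch D G =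
     \<lparr> nvars = tnvars T, ivars = tivars T,
       mobj = (\<lambda>i. aff_eval A C ch D G (tobj T i)),
       mcons = map (\<lambda>(a, b). (\<lambda>i. aff_eval A C ch D G (a i), aff_eval A C ch D G b)) (tcons T) \<rparr>"

definition read_path :: "arc set \<Rightarrow> mip_template \<Rightarrow> (nat \<Rightarrow> real) \<Rightarrow> arc set" where
  "read_path A T x = {e \<in> A. x (tidx T e) = 1}"

end

theory Submission
  imports Defs
begin

text \<open>For a fixed first-stage path \<open>X\<close> with recovery neighbourhood \<open>\<Phi>\<close>, the adversary maximises
  over the polytope \<open>Ucont\<close> the minimum of the linear functions \<open>c \<mapsto> c(Y)\<close>, \<open>Y \<in> \<Phi>\<close>. By LP
  duality (Farkas' lemma, obtained here by Fourier--Motzkin elimination) this worst case is the least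
  value of \<open>\<Sum>\<^sub>e ch e \<cdot> y e + G \<cdot> \<pi> + \<Sum>\<^sub>e D e \<cdot> \<rho> e\<close> over convex combinations \<open>y\<close> of
  incidence vectors of paths in \<open>\<Phi>\<close> and \<open>\<pi>, \<rho> \<ge> 0\<close> with \<open>y \<le> \<pi> + \<rho>\<close>, and by Caratheodory's
  theorem \<open>m + 1\<close> paths suffice. Rec Rob SP thus becomes one minimisation over \<open>X\<close>, paths
  \<open>Y\<^sub>1, \<dots>, Y\<^bsub>m+1\<^esub> \<in> \<Phi>(X, k)\<close>, weights \<open>\<lambda>\<close> and \<open>\<pi>, \<rho>\<close>. Encoding every path by binary
  position variables and linearising the products \<open>x\<^sub>e y\<^sub>j\<^sub>e\<close> and \<open>\<lambda>\<^sub>j y\<^sub>j\<^sub>e\<close> gives a mixed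
  integer program with \<open>O((m + 2) (n\<^sup>2 + n m))\<close> variables and constraints.\<close>

section \<open>Farkas' lemma by Fourier--Motzkin elimination\<close>

definition lin_val :: "'v set \<Rightarrow> ('v \<Rightarrow> real) \<Rightarrow> ('v \<Rightarrow> real) \<Rightarrow> real" where
  "lin_val W a x = (\<Sum>i\<in>W. a i * x i)"

type_synonym 'v ineq = "('v \<Rightarrow> real) \<times> real"

definition sat_ineqs :: "'v set \<Rightarrow> 'v ineq set \<Rightarrow> ('v \<Rightarrow> real) \<Rightarrow> bool" where
  "sat_ineqs W S x \<longleftrightarrow> (\<forall>p\<in>S. lin_val W (fst p) x \<le> snd p)"

definition nonneg_combs :: "'v ineq set \<Rightarrow> 'v ineq set" where
  "nonneg_combs S = {((\<lambda>i. \<Sum>s\<in>S. \<mu> s * fst s i), (\<Sum>s\<in>S. \<mu> s * snd s)) | \<mu>. \<forall>s\<in>S. 0 \<le> \<mu> s}"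

lemma sat_nonneg_combs:
  assumes "finite S" "sat_ineqs W S x" "q \<in> nonneg_combs S" "finite W"
  shows "lin_val W (fst q) x \<le> snd q"
proof -
  obtain \<mu> where mu: "\<forall>s\<in>S. 0 \<le> \<mu> s" and q: "q = ((\<lambda>i. \<Sum>s\<in>S. \<mu> s * fst s i), (\<Sum>s\<in>S. \<mu> s * snd s))"
    using assms(3) unfolding nonneg_combs_def by blast
  have "lin_val W (fst q) x = (\<Sum>i\<in>W. \<Sum>s\<in>S. \<mu> s * fst s i * x i)"
    unfolding q lin_val_def by (simp add: sum_distrib_right)
  also have "\<dots> = (\<Sum>s\<in>S. \<mu> s * lin_val W (fst s) x)"
    unfolding lin_val_def by (subst sum.swap) (simp add: sum_distrib_left mult.assoc)
  also have "\<dots> \<le> (\<Sum>s\<in>S. \<mu> s * snd s)"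
    using assms(2) mu unfolding sat_ineqs_def by (intro sum_mono mult_left_mono) auto
  finally show ?thesis using q by simp
qed

lemma nonneg_combs_trans:
  assumes "finite S" "finite T" "T \<subseteq> nonneg_combs S" "q \<in> nonneg_combs T"
  shows "q \<in> nonneg_combs S"
proof -
  have "\<forall>t\<in>T. \<exists>\<mu>. (\<forall>s\<in>S. 0 \<le> \<mu> s) \<and> t = ((\<lambda>i. \<Sum>s\<in>S. \<mu> s * fst s i), (\<Sum>s\<in>S. \<mu> s * snd s))"
    using assms(3) unfolding nonneg_combs_def by blast
  then obtain M where M: "\<forall>t\<in>T. (\<forall>s\<in>S. 0 \<le> M t s)
      \<and> t = ((\<lambda>i. \<Sum>s\<in>S. M t s * fst s i), (\<Sum>s\<in>S. M t s * snd s))"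
    by (rule bchoice[elim_format]) blast
  obtain \<nu> where nu: "\<forall>t\<in>T. 0 \<le> \<nu> t" and q: "q = ((\<lambda>i. \<Sum>t\<in>T. \<nu> t * fst t i), (\<Sum>t\<in>T. \<nu> t * snd t))"
    using assms(4) unfolding nonneg_combs_def by blast
  define \<mu> where "\<mu> s = (\<Sum>t\<in>T. \<nu> t * M t s)" for s
  have compose: "(\<Sum>t\<in>T. \<nu> t * f t) = (\<Sum>s\<in>S. \<mu> s * g s)"
    if "\<forall>t\<in>T. f t = (\<Sum>s\<in>S. M t s * g s)" for f g :: "_ \<Rightarrow> real"
  proof -
    have "(\<Sum>t\<in>T. \<nu> t * f t) = (\<Sum>t\<in>T. \<nu> t * (\<Sum>s\<in>S. M t s * g s))"
      using that by (intro sum.cong) auto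
    also have "\<dots> = (\<Sum>s\<in>S. \<mu> s * g s)"
      unfolding \<mu>_def by (simp add: sum_distrib_left sum_distrib_right mult.assoc sum.swap[of _ T S])
    finally show ?thesis .
  qed
  have "(\<Sum>t\<in>T. \<nu> t * fst t i) = (\<Sum>s\<in>S. \<mu> s * fst s i)" for i
    using M by (intro compose) (metis (no_types, lifting) fst_conv)
  moreover have "(\<Sum>t\<in>T. \<nu> t * snd t) = (\<Sum>s\<in>S. \<mu> s * snd s)"
    using M by (intro compose) (metis (no_types, lifting) snd_conv)
  moreover have "\<forall>s\<in>S. 0 \<le> \<mu> s" unfolding \<mu>_def using nu M by (simp add: sum_nonneg)
  ultimately show ?thesis unfolding nonneg_combs_def q by auto
qed

definition fm_combine :: "'v \<Rightarrow> 'v ineq \<Rightarrow> 'v ineq \<Rightarrow> 'v ineq" where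
  "fm_combine j p q = ((\<lambda>i. (- fst q j) * fst p i + fst p j * fst q i), (- fst q j) * snd p
    + fst p j * snd q)"

definition fm_elim :: "'v \<Rightarrow> 'v ineq set \<Rightarrow> 'v ineq set" where
  "fm_elim j S = {p\<in>S. fst p j = 0} \<union> (\<lambda>(p,q). fm_combine j p q) ` {(p,q). p\<in>S \<and> q\<in>S
    \<and> fst p j > 0 \<and> fst q j < 0}"

lemma finite_fm_elim: "finite S \<Longrightarrow> finite (fm_elim j S)"
proof -
  assume f: "finite S"
  have "{(p,q). p\<in>S \<and> q\<in>S \<and> fst p j > 0 \<and> fst q j < 0} \<subseteq> S \<times> S" by auto
  then have "finite {(p,q). p\<in>S \<and> q\<in>S \<and> fst p j > 0 \<and> fst q j < 0}"
    using f by (meson finite_SigmaI finite_subset)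
  then show ?thesis unfolding fm_elim_def using f by auto
qed

lemma self_in_nonneg_combs: "finite S \<Longrightarrow> s \<in> S \<Longrightarrow> s \<in> nonneg_combs S"
proof -
  assume f: "finite S" and s: "s \<in> S"
  define \<mu> where "\<mu> s' = (if s' = s then 1 else (0::real))" for s'
  have gen: "(\<Sum>s'\<in>S. \<mu> s' * g s') = g s" for g :: "_ \<Rightarrow> real"
  proof -
    have "(\<Sum>s'\<in>S. \<mu> s' * g s') = (\<Sum>s'\<in>S. if s' = s then g s else 0)"
      by (rule sum.cong) (auto simp: \<mu>_def)
    then show ?thesis using f s by simp
  qed
  have "(\<lambda>i. \<Sum>s'\<in>S. \<mu> s' * fst s' i) = fst s" using gen[of "\<lambda>s'. fst s' _"] by auto
  moreover have "(\<Sum>s'\<in>S. \<mu> s' * snd s') = snd s" using gen by auto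
  ultimately show ?thesis unfolding nonneg_combs_def
    by (auto intro!: exI[of _ \<mu>] simp: \<mu>_def)
qed

lemma fm_combine_in_nonneg_combs:
  assumes f: "finite S" and p: "p\<in>S" and q: "q\<in>S" and pj: "fst p j > 0" and qj: "fst q j < 0"
  shows "fm_combine j p q \<in> nonneg_combs S"
proof -
  have ne: "p \<noteq> q" using pj qj by auto
  define \<mu> where "\<mu> s = (if s = p then - fst q j else 0) + (if s = q then fst p j else 0)" for s
  have pos: "\<forall>s\<in>S. 0 \<le> \<mu> s" using pj qj by (auto simp: \<mu>_def)
  have comb: "(\<Sum>s\<in>S. \<mu> s * g s) = (- fst q j) * g p + fst p j * g q" for g :: "_ \<Rightarrow> real"
  proof -
    have "(\<Sum>s\<in>S. \<mu> s * g s)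
        = (\<Sum>s\<in>S. (if s = p then - fst q j * g p else 0) + (if s = q then fst p j * g q else 0))"
      using ne by (intro sum.cong) (auto simp: \<mu>_def)
    also have "\<dots> = (- fst q j) * g p + fst p j * g q" using f p q by (simp only: sum.distrib) simp
    finally show ?thesis .
  qed
  show ?thesis unfolding nonneg_combs_def fm_combine_def
    using pos comb[of "\<lambda>s. snd s"] comb[of "\<lambda>s. fst s _"] by (intro CollectI exI[of _ \<mu>]) auto
qed

lemma fm_elim_subset: "finite S \<Longrightarrow> fm_elim j S \<subseteq> nonneg_combs S"
  unfolding fm_elim_def using self_in_nonneg_combs fm_combine_in_nonneg_combs by auto

lemma fm_elim_coeff_zero: "p \<in> fm_elim j S \<Longrightarrow> fst p j = 0"
  unfolding fm_elim_def fm_combine_def by auto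

lemma fm_elim_keeps_zero_coeff: assumes "\<forall>p\<in>S. fst p i = 0" "p \<in> fm_elim j S" shows "fst p i = 0"
proof -
  from assms(2) consider "p\<in>S" | pp qq where "p = fm_combine j pp qq" "pp\<in>S" "qq\<in>S"
    unfolding fm_elim_def by auto
  then show ?thesis using assms(1) by cases (auto simp: fm_combine_def)
qed

lemma lin_val_update: "finite W \<Longrightarrow> j \<in> W \<Longrightarrow> lin_val W a (x(j:=t)) = lin_val W a x + a j * (t - x j)"
proof -
  assume "finite W" "j \<in> W"
  then have "lin_val W a (x(j:=t)) = a j * t + (\<Sum>i\<in>W-{j}. a i * x i)"
    and "lin_val W a x = a j * x j + (\<Sum>i\<in>W-{j}. a i * x i)"
    unfolding lin_val_def by (simp_all add: sum.remove)
  then show ?thesis by (simp add: algebra_simps)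
qed

lemma one_var_solvable:
  fixes a r :: "'p \<Rightarrow> real"
  assumes fin: "finite S"
    and zero: "\<And>p. p \<in> S \<Longrightarrow> a p = 0 \<Longrightarrow> 0 \<le> r p"
    and cross: "\<And>p q. p \<in> S \<Longrightarrow> q \<in> S \<Longrightarrow> 0 < a p \<Longrightarrow> a q < 0 \<Longrightarrow> r q / a q \<le> r p / a p"
  shows "\<exists>t. \<forall>p\<in>S. a p * t \<le> r p"
proof -
  define Pos where "Pos = {p\<in>S. 0 < a p}"
  define Neg where "Neg = {p\<in>S. a p < 0}"
  have fin': "finite Pos" "finite Neg" using fin by (auto simp: Pos_def Neg_def)
  define t where "t = (if Pos = {} then (if Neg = {} then 0 else Max ((\<lambda>q. r q / a q) ` Neg))
                      else Min ((\<lambda>p. r p / a p) ` Pos))"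
  have "a p * t \<le> r p" if pS: "p \<in> S" for p
  proof (cases "a p" "0 :: real" rule: linorder_cases)
    case equal then show ?thesis using zero pS by simp
  next
    case greater
    then have "t \<le> r p / a p" using fin' pS unfolding t_def Pos_def by auto
    then show ?thesis using greater by (simp add: field_simps mult.commute)
  next
    case less
    then have pN: "p \<in> Neg" using pS by (simp add: Neg_def)
    have "r p / a p \<le> t"
    proof (cases "Pos = {}")
      case True then show ?thesis unfolding t_def using fin' pN by auto
    next
      case False
      then show ?thesis unfolding t_def
        using fin' pN cross by (auto intro!: Min.boundedI simp: Pos_def Neg_def)
    qed
    then show ?thesis using less by (simp add: field_simps mult.commute)
  qed
  then show ?thesis by blast
qed

lemma fm_elim_lift:
  assumes fS: "finite S" and fW: "finite W" and jW: "j \<in> W" and sat: "sat_ineqs W (fm_elim j S) x"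
  shows "\<exists>t. sat_ineqs W S (x(j:=t))"
proof -
  define r where "r p = snd p - lin_val W (fst p) x + fst p j * x j" for p :: "'a ineq"
  have "lin_val W (fst p) (x(j:=t)) \<le> snd p \<longleftrightarrow> fst p j * t \<le> r p" for p t
    using lin_val_update[OF fW jW, of "fst p" x t] unfolding r_def by (auto simp: algebra_simps)
  then have "sat_ineqs W S (x(j:=t)) \<longleftrightarrow> (\<forall>p\<in>S. fst p j * t \<le> r p)" for t
    unfolding sat_ineqs_def by blast
  moreover have "\<exists>t. \<forall>p\<in>S. fst p j * t \<le> r p"
  proof (rule one_var_solvable[OF fS])
    fix p assume "p \<in> S" "fst p j = 0"
    then have "p \<in> fm_elim j S" unfolding fm_elim_def by auto
    then show "0 \<le> r p" using sat \<open>fst p j = 0\<close> unfolding sat_ineqs_def r_def by auto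
  next
    fix p q assume pq: "p \<in> S" "q \<in> S" "0 < fst p j" "fst q j < 0"
    have "fm_combine j p q \<in> fm_elim j S" unfolding fm_elim_def using pq by force
    then have "lin_val W (fst (fm_combine j p q)) x \<le> snd (fm_combine j p q)"
      using sat unfolding sat_ineqs_def by auto
    moreover have "lin_val W (fst (fm_combine j p q)) x
        = (- fst q j) * lin_val W (fst p) x + fst p j * lin_val W (fst q) x"
    proof -
      have "lin_val W (fst (fm_combine j p q)) x
          = (\<Sum>i\<in>W. (- fst q j) * (fst p i * x i) + fst p j * (fst q i * x i))"
        unfolding fm_combine_def lin_val_def by (rule sum.cong) (auto simp: algebra_simps)
      then show ?thesis unfolding lin_val_def by (simp only: sum.distrib sum_distrib_left)
    qed
    ultimately have "0 \<le> (- fst q j) * r p + fst p j * r q"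
      unfolding r_def fm_combine_def by (simp add: algebra_simps)
    then have "0 \<le> ((- fst q j) * r p + fst p j * r q) / (fst p j * (- fst q j))"
      using pq by (intro divide_nonneg_pos) (auto simp: mult_pos_neg)
    also have "\<dots> = r p / fst p j - r q / fst q j" using pq by (simp add: field_simps)
    finally show "r q / fst q j \<le> r p / fst p j" by simp
  qed
  ultimately show ?thesis by blast
qed

fun fm_elim_list :: "'v list \<Rightarrow> 'v ineq set \<Rightarrow> 'v ineq set" where
  "fm_elim_list [] S = S"
| "fm_elim_list (j#js) S = fm_elim_list js (fm_elim j S)"

lemma finite_fm_elim_list: "finite S \<Longrightarrow> finite (fm_elim_list js S)"
  by (induction js arbitrary: S) (auto simp: finite_fm_elim)

lemma fm_elim_list_subset: "finite S \<Longrightarrow> fm_elim_list js S \<subseteq> nonneg_combs S"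
proof (induction js arbitrary: S)
  case Nil then show ?case using self_in_nonneg_combs by auto
next
  case (Cons j js)
  have "fm_elim_list js (fm_elim j S) \<subseteq> nonneg_combs (fm_elim j S)"
    using Cons.IH[OF finite_fm_elim[OF Cons.prems]] .
  then show ?case
    using nonneg_combs_trans[OF Cons.prems finite_fm_elim[OF Cons.prems] fm_elim_subset[OF
      Cons.prems]] by auto
qed

lemma fm_elim_list_keeps_zero_coeff:
  "\<forall>q\<in>S. fst q i = 0 \<Longrightarrow> p \<in> fm_elim_list js S \<Longrightarrow> fst p i = 0"
  by (induction js arbitrary: S) (auto intro: fm_elim_keeps_zero_coeff)

lemma fm_elim_list_coeff_zero: "p \<in> fm_elim_list js S \<Longrightarrow> i \<in> set js \<Longrightarrow> fst p i = 0"
proof (induction js arbitrary: S)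
  case Nil then show ?case by simp
next
  case (Cons j js)
  show ?case
  proof (cases "i \<in> set js")
    case True then show ?thesis using Cons by auto
  next
    case False
    then have "\<forall>q\<in>fm_elim j S. fst q i = 0" using Cons.prems(2) fm_elim_coeff_zero by auto
    then show ?thesis using fm_elim_list_keeps_zero_coeff[OF _ Cons.prems(1)[simplified]] by blast
  qed
qed

lemma fm_elim_list_lift:
  assumes "finite S" "finite W" "set js \<subseteq> W" "sat_ineqs W (fm_elim_list js S) x"
  shows "\<exists>x'. sat_ineqs W S x' \<and> (\<forall>i. i \<notin> set js \<longrightarrow> x' i = x i)"
  using assms
proof (induction js arbitrary: S x)
  case Nil then show ?case by auto
next
  case (Cons j js)
  obtain x1 where x1: "sat_ineqs W (fm_elim j S) x1" "\<forall>i. i \<notin> set js \<longrightarrow> x1 i = x i"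
    using Cons.IH[OF finite_fm_elim[OF Cons.prems(1)] Cons.prems(2) _ Cons.prems(4)[simplified]]
      Cons.prems(3)
    by auto
  obtain t where "sat_ineqs W S (x1(j:=t))"
    using fm_elim_lift[OF Cons.prems(1,2) _ x1(1)] Cons.prems by auto
  moreover have "\<forall>i. i\<notin>set (j#js) \<longrightarrow> (x1(j:=t)) i = x i" using x1 by auto
  ultimately show ?case by blast
qed

lemma one_var_bounded_witness:
  fixes a r :: "'p \<Rightarrow> real"
  assumes fin: "finite R"
    and feas: "\<forall>p\<in>R. a p * t0 \<le> r p"
    and down: "\<And>t t'. \<forall>p\<in>R. a p * t \<le> r p \<Longrightarrow> t' \<le> t \<Longrightarrow> \<forall>p\<in>R. a p * t' \<le> r p"
    and bnd: "\<And>t. \<forall>p\<in>R. a p * t \<le> r p \<Longrightarrow> t \<le> v"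
  shows "\<exists>p\<in>R. 0 < a p \<and> r p / a p \<le> v"
proof -
  have a_nonneg: "0 \<le> a p" if pR: "p \<in> R" for p
  proof (rule ccontr)
    assume neg: "\<not> 0 \<le> a p"
    define t where "t = min t0 (r p / a p - 1)"
    have "a p * t \<le> r p" using down[OF feas, of t] pR unfolding t_def by auto
    moreover have "a p * (r p / a p - 1) \<le> a p * t"
      using neg unfolding t_def by (intro mult_left_mono_neg) auto
    moreover have "a p * (r p / a p - 1) = r p - a p" using neg by (simp add: field_simps)
    ultimately show False using neg by linarith
  qed
  define Pos where "Pos = {p\<in>R. 0 < a p}"
  have "Pos \<noteq> {}"
  proof
    assume "Pos = {}"
    then have "\<forall>p\<in>R. a p = 0" using a_nonneg unfolding Pos_def by force
    then have "\<forall>p\<in>R. a p * (v + 1) \<le> r p" using feas by simp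
    then show False using bnd by fastforce
  qed
  define m where "m = Min ((\<lambda>p. r p / a p) ` Pos)"
  have fPos: "finite Pos" using fin by (simp add: Pos_def)
  have "m \<in> (\<lambda>p. r p / a p) ` Pos"
    unfolding m_def using fPos \<open>Pos \<noteq> {}\<close> by (intro Min_in) auto
  then obtain p where p: "p \<in> Pos" "m = r p / a p" by blast
  have "\<forall>q\<in>R. a q * m \<le> r q"
  proof
    fix q assume qR: "q \<in> R"
    show "a q * m \<le> r q"
    proof (cases "0 < a q")
      case True
      then have "m \<le> r q / a q" unfolding m_def using fPos qR by (auto simp: Pos_def)
      then show ?thesis using True by (simp add: field_simps mult.commute)
    next
      case False
      then have "a q = 0" using a_nonneg[OF qR] by simp
      then show ?thesis using feas qR by force
    qed
  qed
  then show ?thesis using bnd p unfolding Pos_def by force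
qed

text \<open>Eliminating all variables but \<open>z\<close> leaves a system in \<open>z\<close> alone, whose solutions are
  exactly the values of \<open>z\<close> on solutions of the original system; its tightest upper bound is a
  nonnegative combination of the original rows.\<close>
lemma farkas_coordinate_bound_set:
  fixes S :: "'v ineq set"
  assumes fW: "finite W" and zW: "z \<in> W" and fS: "finite S"
   and supp: "\<forall>p\<in>S. \<forall>i. i \<notin> W \<longrightarrow> fst p i = 0"
   and feas: "sat_ineqs W S xf"
   and down: "\<And>x t. sat_ineqs W S x \<Longrightarrow> t \<le> x z \<Longrightarrow> sat_ineqs W S (x(z:=t))"
   and bnd: "\<And>x. sat_ineqs W S x \<Longrightarrow> x z \<le> v"
  shows "\<exists>\<mu>. (\<forall>s\<in>S. 0 \<le> \<mu> s) \<and> (\<forall>i. (\<Sum>s\<in>S. \<mu> s * fst s i) = (if i = z then 1 else 0))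
            \<and> (\<Sum>s\<in>S. \<mu> s * snd s) \<le> v"
proof -
  obtain js where js: "set js = W - {z}" using finite_list[of "W - {z}"] fW by auto
  define R where "R = fm_elim_list js S"
  have fR: "finite R" unfolding R_def using fS finite_fm_elim_list by auto
  have RS: "R \<subseteq> nonneg_combs S" unfolding R_def using fS fm_elim_list_subset by auto
  have zeroR: "fst p i = 0" if "p \<in> R" "i \<noteq> z" for p i
    using fm_elim_list_coeff_zero[of p js S i] fm_elim_list_keeps_zero_coeff[of S i p js] supp that js
    unfolding R_def by (cases "i \<in> W") auto
  have "lin_val W (fst p) x = fst p z * x z" if "p \<in> R" for p x
  proof -
    have "lin_val W (fst p) x = (\<Sum>i\<in>W. if i = z then fst p z * x z else 0)"
      unfolding lin_val_def by (rule sum.cong) (auto simp: zeroR[OF that])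
    then show ?thesis using fW zW by simp
  qed
  then have satR: "sat_ineqs W R x \<longleftrightarrow> (\<forall>p\<in>R. fst p z * x z \<le> snd p)" for x
    unfolding sat_ineqs_def by auto
  have coord_values: "(\<forall>p\<in>R. fst p z * t \<le> snd p) \<longleftrightarrow> (\<exists>x. sat_ineqs W S x \<and> x z = t)" for t
  proof
    assume "\<forall>p\<in>R. fst p z * t \<le> snd p"
    then have "sat_ineqs W (fm_elim_list js S) (xf(z := t))" unfolding R_def[symmetric] satR by simp
    then show "\<exists>x. sat_ineqs W S x \<and> x z = t"
      using fm_elim_list_lift[OF fS fW] js by fastforce
  next
    assume "\<exists>x. sat_ineqs W S x \<and> x z = t"
    then show "\<forall>p\<in>R. fst p z * t \<le> snd p"
      using sat_nonneg_combs[OF fS _ _ fW] RS satR unfolding sat_ineqs_def by fastforce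
  qed
  obtain p where pR: "p \<in> R" and apos: "0 < fst p z" and pv: "snd p / fst p z \<le> v"
  proof (rule one_var_bounded_witness[OF fR, of "\<lambda>p. fst p z" "xf z" snd v, THEN bexE])
    show "\<forall>p\<in>R. fst p z * xf z \<le> snd p" using coord_values feas by blast
    show "\<forall>p\<in>R. fst p z * t' \<le> snd p" if "\<forall>p\<in>R. fst p z * t \<le> snd p" "t' \<le> t" for t t'
      using that down unfolding coord_values by fastforce
    show "t \<le> v" if "\<forall>p\<in>R. fst p z * t \<le> snd p" for t
      using that bnd unfolding coord_values by blast
  qed blast
  obtain \<mu> where mu: "\<forall>s\<in>S. 0 \<le> \<mu> s" and
    p1: "fst p = (\<lambda>i. \<Sum>s\<in>S. \<mu> s * fst s i)" and p2: "snd p = (\<Sum>s\<in>S. \<mu> s * snd s)"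
    using RS pR unfolding nonneg_combs_def by auto
  show ?thesis
  proof (intro exI[of _ "\<lambda>s. \<mu> s / fst p z"] conjI allI ballI)
    show "0 \<le> \<mu> s / fst p z" if "s \<in> S" for s using mu that apos by simp
    show "(\<Sum>s\<in>S. \<mu> s / fst p z * fst s i) = (if i = z then 1 else 0)" for i
      using zeroR[OF pR, of i] apos unfolding p1 by (simp add: sum_divide_distrib[symmetric])
    show "(\<Sum>s\<in>S. \<mu> s / fst p z * snd s) \<le> v"
      using pv unfolding p2 by (simp add: sum_divide_distrib[symmetric])
  qed
qed

lemma sum_image_by_representatives:
  fixes f :: "'r \<Rightarrow> 's" and \<mu> :: "'s \<Rightarrow> real"
  assumes "finite I"
  shows "(\<Sum>r\<in>I. (if inv_into I f (f r) = r then \<mu> (f r) else 0) * g (f r)) = (\<Sum>s\<in>f ` I. \<mu> s * g s)"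
proof -
  let ?rep = "inv_into I f"
  have reps: "?rep ` f ` I \<subseteq> I" by (auto intro: inv_into_into)
  have "?rep (f r) = r \<longleftrightarrow> r \<in> ?rep ` f ` I" if "r \<in> I" for r
    using that by (auto simp: f_inv_into_f) (metis imageI)
  then have "(\<Sum>r\<in>I. (if ?rep (f r) = r then \<mu> (f r) else 0) * g (f r))
      = (\<Sum>r\<in>I. if r \<in> ?rep ` f ` I then \<mu> (f r) * g (f r) else 0)"
    by (intro sum.cong) auto
  also have "\<dots> = (\<Sum>r\<in>?rep ` f ` I. \<mu> (f r) * g (f r))"
    using assms reps by (simp add: sum.inter_restrict[symmetric] Int_absorb1)
  also have "\<dots> = (\<Sum>s\<in>f ` I. \<mu> s * g s)"
    by (subst sum.reindex) (auto intro!: sum.cong inj_on_inv_into simp: f_inv_into_f)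
  finally show ?thesis .
qed

lemma farkas_coordinate_bound:
  fixes a :: "'r \<Rightarrow> 'v \<Rightarrow> real" and b :: "'r \<Rightarrow> real"
  assumes fW: "finite W" and zW: "z \<in> W" and fI: "finite I"
   and supp: "\<forall>r\<in>I. \<forall>i. i \<notin> W \<longrightarrow> a r i = 0"
   and feas: "\<forall>r\<in>I. lin_val W (a r) xf \<le> b r"
   and down: "\<And>x t. \<forall>r\<in>I. lin_val W (a r) x \<le> b r \<Longrightarrow> t \<le> x z \<Longrightarrow> \<forall>r\<in>I. lin_val W (a r) (x(z:=t)) \<le> b r"
   and bnd: "\<And>x. \<forall>r\<in>I. lin_val W (a r) x \<le> b r \<Longrightarrow> x z \<le> v"
  shows "\<exists>\<mu>. (\<forall>r\<in>I. 0 \<le> \<mu> r) \<and> (\<forall>i. (\<Sum>r\<in>I. \<mu> r * a r i) = (if i = z then 1 else 0))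
            \<and> (\<Sum>r\<in>I. \<mu> r * b r) \<le> v"
proof -
  let ?f = "\<lambda>r. (a r, b r)"
  have sat: "sat_ineqs W (?f ` I) x \<longleftrightarrow> (\<forall>r\<in>I. lin_val W (a r) x \<le> b r)" for x
    unfolding sat_ineqs_def by auto
  have "\<exists>\<mu>. (\<forall>s\<in>?f ` I. 0 \<le> \<mu> s) \<and> (\<forall>i. (\<Sum>s\<in>?f ` I. \<mu> s * fst s i) = (if i = z then 1 else 0))
      \<and> (\<Sum>s\<in>?f ` I. \<mu> s * snd s) \<le> v"
  proof (rule farkas_coordinate_bound_set[OF fW zW finite_imageI[OF fI]])
    show "\<forall>p\<in>?f ` I. \<forall>i. i \<notin> W \<longrightarrow> fst p i = 0" using supp by auto
    show "sat_ineqs W (?f ` I) xf" unfolding sat by (rule feas)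
    show "sat_ineqs W (?f ` I) (x(z := t))" if "sat_ineqs W (?f ` I) x" "t \<le> x z" for x t
      using that down unfolding sat by blast
    show "x z \<le> v" if "sat_ineqs W (?f ` I) x" for x
      using that bnd unfolding sat by blast
  qed
  then obtain \<mu> where mu: "\<forall>s\<in>?f ` I. 0 \<le> \<mu> s"
    "\<forall>i. (\<Sum>s\<in>?f ` I. \<mu> s * fst s i) = (if i = z then 1 else 0)" "(\<Sum>s\<in>?f ` I. \<mu> s * snd s) \<le> v"
    by blast
  define \<nu> where "\<nu> r = (if inv_into I ?f (?f r) = r then \<mu> (?f r) else 0)" for r
  have "(\<Sum>r\<in>I. \<nu> r * g (?f r)) = (\<Sum>s\<in>?f ` I. \<mu> s * g s)" for g
    unfolding \<nu>_def by (rule sum_image_by_representatives[OF fI])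
  from this[of "\<lambda>s. fst s _"] this[of snd] show ?thesis
    using mu by (intro exI[of _ \<nu>]) (auto simp: \<nu>_def)
qed

section \<open>Caratheodory's theorem\<close>

lemma linear_dependence_exists:
  fixes w :: "'i \<Rightarrow> 'k \<Rightarrow> real"
  assumes "finite K" "finite I" "card I > card K"
  shows "\<exists>u. (\<exists>Y\<in>I. u Y \<noteq> 0) \<and> (\<forall>j\<in>K. (\<Sum>Y\<in>I. u Y * w Y j) = 0)"
  using assms
proof (induction K arbitrary: I w rule: finite_induct)
  case empty
  then obtain Y where "Y \<in> I" by fastforce
  then show ?case by (intro exI[of _ "\<lambda>_. 1"]) auto
next
  case (insert k K)
  show ?case
  proof (cases "\<forall>Y\<in>I. w Y k = 0")
    case True
    have "card I > card K" using insert by auto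
    then obtain u where u: "\<exists>Y\<in>I. u Y \<noteq> 0" "\<forall>j\<in>K. (\<Sum>Y\<in>I. u Y * w Y j) = 0"
      using insert.IH[OF insert.prems(1)] by blast
    then show ?thesis using True by (intro exI[of _ u]) auto
  next
    case False
    then obtain Y0 where Y0: "Y0 \<in> I" "w Y0 k \<noteq> 0" by auto
    define I' where "I' = I - {Y0}"
    have fI': "finite I'" using insert by (simp add: I'_def)
    have cI': "card I' > card K" using insert Y0 by (simp add: I'_def)
    define w' where "w' Y j = w Y j - (w Y k / w Y0 k) * w Y0 j" for Y j
    obtain u' where u': "\<exists>Y\<in>I'. u' Y \<noteq> 0" "\<forall>j\<in>K. (\<Sum>Y\<in>I'. u' Y * w' Y j) = 0"
      using insert.IH[OF fI' cI', of w'] by blast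
    define u where "u Y = (if Y = Y0 then - (\<Sum>Y\<in>I'. u' Y * w Y k) / w Y0 k else u' Y)" for Y
    have split: "(\<Sum>Y\<in>I. u Y * w Y j) = u Y0 * w Y0 j + (\<Sum>Y\<in>I'. u' Y * w Y j)" for j
    proof -
      have "(\<Sum>Y\<in>I. u Y * w Y j) = u Y0 * w Y0 j + (\<Sum>Y\<in>I'. u Y * w Y j)"
        unfolding I'_def using insert.prems(1) Y0 by (simp add: sum.remove)
      moreover have "(\<Sum>Y\<in>I'. u Y * w Y j) = (\<Sum>Y\<in>I'. u' Y * w Y j)"
        by (rule sum.cong) (auto simp: u_def I'_def)
      ultimately show ?thesis by simp
    qed
    have "\<forall>j\<in>insert k K. (\<Sum>Y\<in>I. u Y * w Y j) = 0"
    proof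
      fix j assume j: "j \<in> insert k K"
      show "(\<Sum>Y\<in>I. u Y * w Y j) = 0"
      proof (cases "j = k")
        case True
        then show ?thesis unfolding split using Y0 by (simp add: u_def)
      next
        case False
        then have jK: "j \<in> K" using j by auto
        have "(\<Sum>Y\<in>I'. u' Y * w' Y j) = (\<Sum>Y\<in>I'. u' Y * w Y j) - (\<Sum>Y\<in>I'. u' Y * w Y k) * w Y0 j / w Y0 k"
          unfolding w'_def by (simp add: algebra_simps sum_subtractf sum_distrib_left
            sum_divide_distrib sum_distrib_right)
        then show ?thesis unfolding split using u'(2) jK Y0 by (simp add: u_def field_simps)
      qed
    qed
    moreover have "\<exists>Y\<in>I. u Y \<noteq> 0"
    proof -
      obtain Y where "Y\<in>I'" "u' Y \<noteq> 0" using u'(1) by blast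
      then have "u Y \<noteq> 0" "Y\<in>I" by (auto simp: u_def I'_def)
      then show ?thesis by blast
    qed
    ultimately show ?thesis by blast
  qed
qed

lemma affine_dependence_exists:
  fixes v :: "'i \<Rightarrow> 'k \<Rightarrow> real"
  assumes fK: "finite K" and fP: "finite \<Phi>" and c: "card K + 1 < card \<Phi>"
  shows "\<exists>u. (\<exists>Y\<in>\<Phi>. u Y \<noteq> 0) \<and> (\<Sum>Y\<in>\<Phi>. u Y) = 0 \<and> (\<forall>e\<in>K. (\<Sum>Y\<in>\<Phi>. u Y * v Y e) = 0)"
proof -
  define w where "w Y j = (case j of None \<Rightarrow> 1 | Some e \<Rightarrow> v Y e)" for Y j
  have "card (insert None (Some ` K)) = card K + 1"
    using fK by (simp add: card_image)
  then obtain u where "\<exists>Y\<in>\<Phi>. u Y \<noteq> 0" "\<forall>j\<in>insert None (Some ` K). (\<Sum>Y\<in>\<Phi>. u Y * w Y j) = 0"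
    using linear_dependence_exists[of "insert None (Some ` K)" \<Phi> w] fK fP c by auto
  then show ?thesis unfolding w_def by (intro exI[of _ u]) auto
qed

lemma caratheodory_step:
  fixes v :: "'i \<Rightarrow> 'k \<Rightarrow> real"
  assumes fK: "finite K" and fP: "finite \<Phi>" and big: "card K + 1 < card \<Phi>"
    and nn: "\<forall>Y\<in>\<Phi>. 0 \<le> lam Y" and s1: "(\<Sum>Y\<in>\<Phi>. lam Y) = 1"
  shows "\<exists>Y1\<in>\<Phi>. \<exists>\<mu>. \<mu> Y1 = 0 \<and> (\<forall>Y\<in>\<Phi>. 0 \<le> \<mu> Y) \<and> (\<Sum>Y\<in>\<Phi>. \<mu> Y) = 1
           \<and> (\<forall>e\<in>K. (\<Sum>Y\<in>\<Phi>. \<mu> Y * v Y e) = (\<Sum>Y\<in>\<Phi>. lam Y * v Y e))"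
proof (cases "\<exists>Y\<in>\<Phi>. lam Y = 0")
  case True
  then show ?thesis using nn s1 by blast
next
  case False
  then have pos: "\<forall>Y\<in>\<Phi>. 0 < lam Y" using nn by force
  obtain u where u: "\<exists>Y\<in>\<Phi>. u Y \<noteq> 0" "(\<Sum>Y\<in>\<Phi>. u Y) = 0" "\<forall>e\<in>K. (\<Sum>Y\<in>\<Phi>. u Y * v Y e) = 0"
    using affine_dependence_exists[OF fK fP big] by blast
  define P where "P = {Y\<in>\<Phi>. u Y > 0}"
  have "P \<noteq> {}"
  proof
    assume "P = {}"
    then have "\<forall>Y\<in>\<Phi>. - u Y \<ge> 0" unfolding P_def by force
    moreover have "(\<Sum>Y\<in>\<Phi>. - u Y) = 0" using u(2) by (simp add: sum_negf)
    ultimately have "\<forall>Y\<in>\<Phi>. u Y = 0" using sum_nonneg_eq_0_iff[OF fP, of "\<lambda>Y. - u Y"] by simp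
    then show False using u(1) by blast
  qed
  have fPP: "finite P" using fP by (simp add: P_def)
  define \<tau> where "\<tau> = Min ((\<lambda>Y. lam Y / u Y) ` P)"
  have "\<tau> \<in> (\<lambda>Y. lam Y / u Y) ` P" unfolding \<tau>_def using fPP \<open>P \<noteq> {}\<close> by (intro Min_in) auto
  then obtain Y1 where Y1: "Y1 \<in> \<Phi>" "0 < u Y1" "\<tau> = lam Y1 / u Y1" unfolding P_def by blast
  have tle: "\<tau> \<le> lam Y / u Y" if "Y \<in> P" for Y unfolding \<tau>_def using fPP that by auto
  have tpos: "0 \<le> \<tau>" using Y1 pos by auto
  define \<mu> where "\<mu> Y = lam Y - \<tau> * u Y" for Y
  have "\<mu> Y1 = 0" unfolding \<mu>_def using Y1 by simp
  moreover have "\<forall>Y\<in>\<Phi>. 0 \<le> \<mu> Y"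
  proof
    fix Y assume Y: "Y \<in> \<Phi>"
    show "0 \<le> \<mu> Y"
    proof (cases "u Y > 0")
      case True
      then have "\<tau> \<le> lam Y / u Y" using tle Y P_def by auto
      then show ?thesis unfolding \<mu>_def using True by (simp add: field_simps)
    next
      case False
      then have "\<tau> * u Y \<le> 0" using tpos by (simp add: mult_nonneg_nonpos)
      then show ?thesis unfolding \<mu>_def using pos Y by force
    qed
  qed
  moreover have "(\<Sum>Y\<in>\<Phi>. \<mu> Y) = 1" unfolding \<mu>_def using s1 u(2)
    by (simp add: sum_subtractf sum_distrib_left[symmetric])
  moreover have "(\<Sum>Y\<in>\<Phi>. \<mu> Y * v Y e) = (\<Sum>Y\<in>\<Phi>. lam Y * v Y e)" if "e \<in> K" for e
    using u(3) that unfolding \<mu>_def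
      by (simp add: algebra_simps sum_subtractf sum_distrib_left[symmetric])
  ultimately show ?thesis using Y1(1) by blast
qed

theorem caratheodory_convex_comb:
  fixes v :: "'i \<Rightarrow> 'k \<Rightarrow> real"
  assumes "finite K" "finite \<Phi>" "\<forall>Y\<in>\<Phi>. 0 \<le> lam Y" "(\<Sum>Y\<in>\<Phi>. lam Y) = 1"
  shows "\<exists>Q lam'. Q \<subseteq> \<Phi> \<and> card Q \<le> card K + 1 \<and> (\<forall>Y\<in>Q. 0 \<le> lam' Y) \<and> (\<Sum>Y\<in>Q. lam' Y) = 1 \<and>
     (\<forall>e\<in>K. (\<Sum>Y\<in>Q. lam' Y * v Y e) = (\<Sum>Y\<in>\<Phi>. lam Y * v Y e))"
  using assms(2-)
proof (induction "card \<Phi>" arbitrary: \<Phi> lam rule: less_induct)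
  case less
  show ?case
  proof (cases "card \<Phi> \<le> card K + 1")
    case True then show ?thesis using less.prems by blast
  next
    case False
    then obtain Y1 \<mu> where Y1: "Y1 \<in> \<Phi>" "\<mu> Y1 = 0" "\<forall>Y\<in>\<Phi>. 0 \<le> \<mu> Y" "(\<Sum>Y\<in>\<Phi>. \<mu> Y) = 1"
      and comb: "\<forall>e\<in>K. (\<Sum>Y\<in>\<Phi>. \<mu> Y * v Y e) = (\<Sum>Y\<in>\<Phi>. lam Y * v Y e)"
      using caratheodory_step[OF assms(1) less.prems(1)] less.prems by fastforce
    let ?\<Phi>' = "\<Phi> - {Y1}"
    have drop: "(\<Sum>Y\<in>?\<Phi>'. \<mu> Y * f Y) = (\<Sum>Y\<in>\<Phi>. \<mu> Y * f Y)" for f :: "'i \<Rightarrow> real"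
      using less.prems(1) Y1(1,2) by (simp add: sum.remove)
    have "card ?\<Phi>' < card \<Phi>" using less.prems(1) Y1(1) by (metis card_Diff1_less)
    moreover have "(\<Sum>Y\<in>?\<Phi>'. \<mu> Y) = 1" using drop[of "\<lambda>_. 1"] Y1(4) by simp
    ultimately obtain Q lam' where "Q \<subseteq> ?\<Phi>'" "card Q \<le> card K + 1" "\<forall>Y\<in>Q. 0 \<le> lam' Y"
      "(\<Sum>Y\<in>Q. lam' Y) = 1"
      "\<forall>e\<in>K. (\<Sum>Y\<in>Q. lam' Y * v Y e) = (\<Sum>Y\<in>?\<Phi>'. \<mu> Y * v Y e)"
      using less.hyps[of ?\<Phi>' \<mu>] less.prems(1) Y1(3) by auto
    then show ?thesis using comb drop by (intro exI[of _ Q] exI[of _ lam']) auto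
  qed
qed

section \<open>Duality for the adversary's problem\<close>

definition min_cost :: "(arc \<Rightarrow> real) \<Rightarrow> arc set set \<Rightarrow> real" where
  "min_cost c \<Phi> = Min ((\<lambda>Y. \<Sum>e\<in>Y. c e) ` \<Phi>)"

lemma sum_of_bool_mult:
  fixes g :: "'a \<Rightarrow> real"
  assumes "finite A" "Y \<subseteq> A"
  shows "(\<Sum>e\<in>A. of_bool (e \<in> Y) * g e) = (\<Sum>e\<in>Y. g e)"
proof -
  have "(\<Sum>e\<in>A. of_bool (e \<in> Y) * g e) = (\<Sum>e\<in>A. if e \<in> Y then g e else 0)" by (intro sum.cong) auto
  also have "\<dots> = (\<Sum>e\<in>A \<inter> Y. g e)" using assms(1) by (simp add: sum.inter_restrict)
  finally show ?thesis using assms(2) by (simp add: Int_absorb1)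
qed

lemma min_cost_le_dual:
  assumes fA: "finite A" and fJ: "finite J" and fP: "finite \<Phi>" and Yf: "\<forall>j\<in>J. Yf j \<in> \<Phi>"
    and sub: "\<forall>Y\<in>\<Phi>. Y \<subseteq> A"
    and lnn: "\<forall>j\<in>J. 0 \<le> lam j" and ls: "(\<Sum>j\<in>J. lam j) = 1"
    and pnn: "0 \<le> \<pi>" and rnn: "\<forall>e\<in>A. 0 \<le> \<rho> e"
    and cov: "\<forall>e\<in>A. (\<Sum>j\<in>J. lam j * of_bool (e \<in> Yf j)) \<le> \<pi> + \<rho> e"
    and c: "c \<in> Ucont A ch D G"
  shows "min_cost c \<Phi> \<le> (\<Sum>e\<in>A. ch e * (\<Sum>j\<in>J. lam j * of_bool (e \<in> Yf j))) + G * \<pi> + (\<Sum>e\<in>A. D e * \<rho> e)"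
proof -
  let ?y = "\<lambda>e. (\<Sum>j\<in>J. lam j * of_bool (e \<in> Yf j))"
  have cb: "\<forall>e\<in>A. ch e \<le> c e \<and> c e \<le> ch e + D e" "(\<Sum>e\<in>A. c e - ch e) \<le> G"
    using c unfolding Ucont_def by auto
  have "min_cost c \<Phi> = (\<Sum>j\<in>J. lam j * min_cost c \<Phi>)"
    using ls by (simp add: sum_distrib_right[symmetric])
  also have "\<dots> \<le> (\<Sum>j\<in>J. lam j * (\<Sum>e\<in>Yf j. c e))"
    using Yf fP lnn unfolding min_cost_def by (intro sum_mono mult_left_mono) auto
  also have "\<dots> = (\<Sum>j\<in>J. lam j * (\<Sum>e\<in>A. of_bool (e \<in> Yf j) * c e))"
    using sum_of_bool_mult[OF fA] sub Yf by (intro sum.cong) auto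
  also have "\<dots> = (\<Sum>e\<in>A. \<Sum>j\<in>J. lam j * of_bool (e \<in> Yf j) * c e)"
    by (subst sum.swap) (simp add: sum_distrib_left mult.assoc)
  also have "\<dots> = (\<Sum>e\<in>A. c e * ?y e)"
    by (simp add: sum_distrib_left mult_ac)
  also have "\<dots> = (\<Sum>e\<in>A. ch e * ?y e) + (\<Sum>e\<in>A. (c e - ch e) * ?y e)"
    by (simp add: algebra_simps sum.distrib[symmetric])
  also have "(\<Sum>e\<in>A. (c e - ch e) * ?y e) \<le> (\<Sum>e\<in>A. (c e - ch e) * (\<pi> + \<rho> e))"
    using cb cov by (intro sum_mono mult_left_mono) auto
  also have "\<dots> = (\<Sum>e\<in>A. c e - ch e) * \<pi> + (\<Sum>e\<in>A. (c e - ch e) * \<rho> e)"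
    by (simp only: distrib_left sum.distrib sum_distrib_right)
  also have "\<dots> \<le> G * \<pi> + (\<Sum>e\<in>A. D e * \<rho> e)"
    using cb pnn rnn by (intro add_mono mult_right_mono sum_mono) auto
  finally show ?thesis by simp
qed

datatype wc_row = Path_row "arc set" | Lower_row arc | Upper_row arc | Budget_row

fun wc_coeff :: "arc set \<Rightarrow> wc_row \<Rightarrow> arc option \<Rightarrow> real" where
  "wc_coeff A (Path_row Y) None = 1"
| "wc_coeff A (Path_row Y) (Some e) = - of_bool (e \<in> Y)"
| "wc_coeff A (Lower_row e) i = - of_bool (i = Some e)"
| "wc_coeff A (Upper_row e) i = of_bool (i = Some e)"
| "wc_coeff A Budget_row None = 0"
| "wc_coeff A Budget_row (Some e) = of_bool (e \<in> A)"

fun wc_rhs :: "arc set \<Rightarrow> (arc \<Rightarrow> real) \<Rightarrow> (arc \<Rightarrow> real) \<Rightarrow> real \<Rightarrow> wc_row \<Rightarrow> real" where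
  "wc_rhs A ch D G (Path_row Y) = 0"
| "wc_rhs A ch D G (Lower_row e) = - ch e"
| "wc_rhs A ch D G (Upper_row e) = ch e + D e"
| "wc_rhs A ch D G Budget_row = G + (\<Sum>e\<in>A. ch e)"

definition wc_rows :: "arc set \<Rightarrow> arc set set \<Rightarrow> wc_row set" where
  "wc_rows A \<Phi> = Path_row ` \<Phi> \<union> Lower_row ` A \<union> Upper_row ` A \<union> {Budget_row}"

lemma sum_wc_rows:
  assumes "finite A" "finite \<Phi>"
  shows "(\<Sum>r\<in>wc_rows A \<Phi>. f r)
    = (\<Sum>Y\<in>\<Phi>. f (Path_row Y)) + (\<Sum>e\<in>A. f (Lower_row e)) + (\<Sum>e\<in>A. f (Upper_row e)) + f Budget_row"
proof -
  have "(\<Sum>r\<in>wc_rows A \<Phi>. f r)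
      = (\<Sum>r\<in>Path_row ` \<Phi>. f r) + (\<Sum>r\<in>Lower_row ` A. f r) + (\<Sum>r\<in>Upper_row ` A. f r) + f Budget_row"
    using assms unfolding wc_rows_def by (subst sum.union_disjoint; auto)+
  then show ?thesis by (simp add: sum.reindex inj_on_def)
qed

lemma lin_val_arc_option:
  "finite A \<Longrightarrow> lin_val (insert None (Some ` A)) a x = a None * x None + (\<Sum>e\<in>A. a (Some e) * x (Some e))"
  unfolding lin_val_def by (simp add: sum.reindex)

lemma lin_val_wc_coeff:
  assumes fA: "finite A"
  shows "Y \<subseteq> A
    \<Longrightarrow> lin_val (insert None (Some ` A)) (wc_coeff A (Path_row Y)) x = x None - (\<Sum>e\<in>Y. x (Some e))"
    and "e \<in> A \<Longrightarrow> lin_val (insert None (Some ` A)) (wc_coeff A (Lower_row e)) x = - x (Some e)"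
    and "e \<in> A \<Longrightarrow> lin_val (insert None (Some ` A)) (wc_coeff A (Upper_row e)) x = x (Some e)"
    and "lin_val (insert None (Some ` A)) (wc_coeff A Budget_row) x = (\<Sum>e\<in>A. x (Some e))"
proof -
  show "Y \<subseteq> A
    \<Longrightarrow> lin_val (insert None (Some ` A)) (wc_coeff A (Path_row Y)) x = x None - (\<Sum>e\<in>Y. x (Some e))"
    using sum_of_bool_mult[OF fA, of Y "\<lambda>e. x (Some e)"]
      by (simp add: lin_val_arc_option[OF fA] sum_negf)
  have single: "(\<Sum>e'\<in>A. of_bool (e' = e) * x (Some e')) = x (Some e)" if "e \<in> A" for e
    using sum_of_bool_mult[OF fA, of "{e}" "\<lambda>e. x (Some e)"] that by simp
  show "e \<in> A \<Longrightarrow> lin_val (insert None (Some ` A)) (wc_coeff A (Lower_row e)) x = - x (Some e)"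
    using single[of e] by (simp add: lin_val_arc_option[OF fA] sum_negf)
  show "e \<in> A \<Longrightarrow> lin_val (insert None (Some ` A)) (wc_coeff A (Upper_row e)) x = x (Some e)"
    using single[of e] by (simp add: lin_val_arc_option[OF fA])
  show "lin_val (insert None (Some ` A)) (wc_coeff A Budget_row) x = (\<Sum>e\<in>A. x (Some e))"
    by (simp add: lin_val_arc_option[OF fA])
qed

lemma wc_system_iff:
  assumes fA: "finite A" and sub: "\<forall>Y\<in>\<Phi>. Y \<subseteq> A"
  shows "(\<forall>r\<in>wc_rows A \<Phi>. lin_val (insert None (Some ` A)) (wc_coeff A r) x \<le> wc_rhs A ch D G r) \<longleftrightarrow>
    (\<forall>Y\<in>\<Phi>. x None \<le> (\<Sum>e\<in>Y. x (Some e))) \<and> (\<forall>e\<in>A. ch e \<le> x (Some e) \<and> x (Some e) \<le> ch e + D e)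
    \<and> (\<Sum>e\<in>A. x (Some e)) \<le> G + (\<Sum>e\<in>A. ch e)"
  using sub unfolding wc_rows_def ball_Un
    by (simp add: lin_val_wc_coeff[OF fA] ball_conj_distrib cong: ball_cong)

lemma bdd_above_min_cost:
  assumes "finite \<Phi>" "Y0 \<in> \<Phi>" "Y0 \<subseteq> A"
  shows "bdd_above ((\<lambda>c. min_cost c \<Phi>) ` Ucont A ch D G)"
proof (rule bdd_aboveI2)
  fix c assume c: "c \<in> Ucont A ch D G"
  have "min_cost c \<Phi> \<le> (\<Sum>e\<in>Y0. c e)" using assms unfolding min_cost_def by auto
  also have "\<dots> \<le> (\<Sum>e\<in>Y0. ch e + D e)" using c assms(3) unfolding Ucont_def by (intro sum_mono) auto
  finally show "min_cost c \<Phi> \<le> (\<Sum>e\<in>Y0. ch e + D e)" .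
qed

lemma worst_case_ge_level:
  assumes fP: "finite \<Phi>" and PNE: "\<Phi> \<noteq> {}" and sub: "\<forall>Y\<in>\<Phi>. Y \<subseteq> A"
    and level: "\<forall>Y\<in>\<Phi>. x None \<le> (\<Sum>e\<in>Y. x (Some e))"
    and box: "\<forall>e\<in>A. ch e \<le> x (Some e) \<and> x (Some e) \<le> ch e + D e"
    and budget: "(\<Sum>e\<in>A. x (Some e)) \<le> G + (\<Sum>e\<in>A. ch e)"
  shows "x None \<le> (SUP c\<in>Ucont A ch D G. min_cost c \<Phi>)"
proof -
  define c where "c e = (if e \<in> A then x (Some e) else ch e)" for e
  have "(\<Sum>e\<in>A. c e - ch e) = (\<Sum>e\<in>A. x (Some e)) - (\<Sum>e\<in>A. ch e)"
    by (simp add: c_def sum_subtractf)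
  then have cU: "c \<in> Ucont A ch D G" using box budget unfolding Ucont_def by (auto simp: c_def)
  have "(\<Sum>e\<in>Y. c e) = (\<Sum>e\<in>Y. x (Some e))" if "Y \<in> \<Phi>" for Y
    using sub that by (intro sum.cong) (auto simp: c_def)
  then have "x None \<le> min_cost c \<Phi>"
    using level fP PNE unfolding min_cost_def by (auto intro!: Min.boundedI)
  also have "\<dots> \<le> (SUP c\<in>Ucont A ch D G. min_cost c \<Phi>)"
  proof -
    obtain Y0 where "Y0 \<in> \<Phi>" using PNE by blast
    then have "bdd_above ((\<lambda>c. min_cost c \<Phi>) ` Ucont A ch D G)"
      using sub by (intro bdd_above_min_cost[OF fP]) auto
    then show ?thesis by (rule cSUP_upper[OF cU])
  qed
  finally show ?thesis .
qed

text \<open>The adversary's problem as a linear program: the coordinate \<open>Some e\<close> is the cost of arc \<open>e\<close>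
  and \<open>None\<close> a level below the cost of every path in \<open>\<Phi>\<close>. Farkas' lemma for the bound
  \<open>level \<le> sup\<close> supplies the dual multipliers.\<close>
lemma worst_case_dual:
  assumes fA: "finite A" and fP: "finite \<Phi>" and PNE: "\<Phi> \<noteq> {}" and sub: "\<forall>Y\<in>\<Phi>. Y \<subseteq> A"
    and nn: "\<forall>e\<in>A. 0 \<le> ch e \<and> 0 \<le> D e" and G0: "0 \<le> G"
  shows "\<exists>lam \<pi> \<rho>. (\<forall>Y\<in>\<Phi>. 0 \<le> lam Y) \<and> (\<Sum>Y\<in>\<Phi>. lam Y) = 1 \<and> 0 \<le> \<pi> \<and> (\<forall>e\<in>A. 0 \<le> \<rho> e)
    \<and> (\<forall>e\<in>A. (\<Sum>Y\<in>\<Phi>. lam Y * of_bool (e \<in> Y)) \<le> \<pi> + \<rho> e)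
    \<and> (\<Sum>e\<in>A. ch e * (\<Sum>Y\<in>\<Phi>. lam Y * of_bool (e \<in> Y))) + G * \<pi> + (\<Sum>e\<in>A. D e * \<rho> e)
        \<le> (SUP c\<in>Ucont A ch D G. min_cost c \<Phi>)"
proof -
  define W where "W = insert None (Some ` A)"
  define f where "f = (SUP c\<in>Ucont A ch D G. min_cost c \<Phi>)"
  let ?sat = "\<lambda>x. \<forall>r\<in>wc_rows A \<Phi>. lin_val W (wc_coeff A r) x \<le> wc_rhs A ch D G r"
  note sat = wc_system_iff[OF fA sub, of _ ch D G, folded W_def]
  have bnd: "x None \<le> f" if "?sat x" for x
    using that unfolding sat f_def by (intro worst_case_ge_level[OF fP PNE sub]) auto
  have "\<exists>\<mu>. (\<forall>r\<in>wc_rows A \<Phi>. 0 \<le> \<mu> r)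
      \<and> (\<forall>i. (\<Sum>r\<in>wc_rows A \<Phi>. \<mu> r * wc_coeff A r i) = (if i = None then 1 else 0))
      \<and> (\<Sum>r\<in>wc_rows A \<Phi>. \<mu> r * wc_rhs A ch D G r) \<le> f"
  proof (rule farkas_coordinate_bound[where xf = "\<lambda>i. case i of None \<Rightarrow> 0 | Some e \<Rightarrow> ch e"])
    show "finite W" "None \<in> W" "finite (wc_rows A \<Phi>)" using fA fP by (auto simp: W_def wc_rows_def)
    show "\<forall>r\<in>wc_rows A \<Phi>. \<forall>i. i \<notin> W \<longrightarrow> wc_coeff A r i = 0"
      using sub unfolding W_def wc_rows_def
        by (auto simp: image_iff) (metis wc_coeff.simps(2,6) subsetD)
    show "?sat (\<lambda>i. case i of None \<Rightarrow> 0 | Some e \<Rightarrow> ch e)"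
      unfolding sat using nn sub G0 by (auto intro!: sum_nonneg)
    show "?sat (x(None := t))" if "?sat x" "t \<le> x None" for x t
      using that unfolding sat by force
  qed (use bnd in blast)
  then obtain \<mu> where mu: "\<forall>r\<in>wc_rows A \<Phi>. 0 \<le> \<mu> r"
    and coord: "\<And>i. (\<Sum>r\<in>wc_rows A \<Phi>. \<mu> r * wc_coeff A r i) = (if i = None then 1 else 0)"
    and val: "(\<Sum>r\<in>wc_rows A \<Phi>. \<mu> r * wc_rhs A ch D G r) \<le> f"
    by blast
  define lam where "lam Y = \<mu> (Path_row Y)" for Y
  define \<sigma> where "\<sigma> e = \<mu> (Lower_row e)" for e
  define \<tau> where "\<tau> e = \<mu> (Upper_row e)" for e
  define y where "y e = (\<Sum>Y\<in>\<Phi>. lam Y * of_bool (e \<in> Y))" for e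
  note split = sum_wc_rows[OF fA fP]
  have nonneg: "\<forall>Y\<in>\<Phi>. 0 \<le> lam Y" "\<forall>e\<in>A. 0 \<le> \<sigma> e" "\<forall>e\<in>A. 0 \<le> \<tau> e" "0 \<le> \<mu> Budget_row"
    using mu unfolding lam_def \<sigma>_def \<tau>_def wc_rows_def by auto
  have "(\<Sum>Y\<in>\<Phi>. lam Y) = 1" using coord[of None] by (simp add: split lam_def)
  moreover have y_eq: "y e = \<tau> e - \<sigma> e + \<mu> Budget_row" if e: "e \<in> A" for e
  proof -
    have "(\<Sum>e'\<in>A. f e' * of_bool (Some e = Some e')) = f e" for f :: "arc \<Rightarrow> real"
      using sum_of_bool_mult[OF fA, of "{e}" f] e by (simp add: mult.commute eq_commute)
    then show ?thesis
      using coord[of "Some e"] e by (simp add: split y_def lam_def \<sigma>_def \<tau>_def sum_negf)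
  qed
  moreover have "(\<Sum>e\<in>A. ch e * y e) + G * \<mu> Budget_row + (\<Sum>e\<in>A. D e * \<tau> e) \<le> f"
  proof -
    have "(\<Sum>r\<in>wc_rows A \<Phi>. \<mu> r * wc_rhs A ch D G r)
        = (\<Sum>e\<in>A. ch e * (\<tau> e - \<sigma> e + \<mu> Budget_row)) + G * \<mu> Budget_row + (\<Sum>e\<in>A. D e * \<tau> e)"
      by (simp add: split \<sigma>_def \<tau>_def algebra_simps sum.distrib sum_subtractf sum_distrib_left sum_negf)
    then show ?thesis using val y_eq by simp
  qed
  ultimately show ?thesis
    using nonneg unfolding y_def f_def
    by (intro exI[of _ lam] exI[of _ "\<mu> Budget_row"] exI[of _ \<tau>]) auto
qed

lemma worst_case_dual_sparse:
  assumes fA: "finite A" and fP: "finite \<Phi>" and "\<Phi> \<noteq> {}" and "\<forall>Y\<in>\<Phi>. Y \<subseteq> A"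
    and "\<forall>e\<in>A. 0 \<le> ch e \<and> 0 \<le> D e" and "0 \<le> G"
  shows "\<exists>Q lam \<pi> \<rho>. Q \<subseteq> \<Phi> \<and> card Q \<le> card A + 1 \<and> (\<forall>Y\<in>Q. 0 \<le> lam Y) \<and> (\<Sum>Y\<in>Q. lam Y) = 1
    \<and> 0 \<le> \<pi> \<and> (\<forall>e\<in>A. 0 \<le> \<rho> e) \<and> (\<forall>e\<in>A. (\<Sum>Y\<in>Q. lam Y * of_bool (e \<in> Y)) \<le> \<pi> + \<rho> e)
    \<and> (\<Sum>e\<in>A. ch e * (\<Sum>Y\<in>Q. lam Y * of_bool (e \<in> Y))) + G * \<pi> + (\<Sum>e\<in>A. D e * \<rho> e)
        \<le> (SUP c\<in>Ucont A ch D G. min_cost c \<Phi>)"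
proof -
  obtain lam \<pi> \<rho> where dual: "\<forall>Y\<in>\<Phi>. 0 \<le> lam Y" "(\<Sum>Y\<in>\<Phi>. lam Y) = 1" "0 \<le> \<pi>" "\<forall>e\<in>A. 0 \<le> \<rho> e"
    "\<forall>e\<in>A. (\<Sum>Y\<in>\<Phi>. lam Y * of_bool (e \<in> Y)) \<le> \<pi> + \<rho> e"
    "(\<Sum>e\<in>A. ch e * (\<Sum>Y\<in>\<Phi>. lam Y * of_bool (e \<in> Y))) + G * \<pi> + (\<Sum>e\<in>A. D e * \<rho> e)
        \<le> (SUP c\<in>Ucont A ch D G. min_cost c \<Phi>)"
    using worst_case_dual[OF assms] by blast
  obtain Q lam' where Q: "Q \<subseteq> \<Phi>" "card Q \<le> card A + 1" "\<forall>Y\<in>Q. 0 \<le> lam' Y" "(\<Sum>Y\<in>Q. lam' Y) = 1"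
    and same: "\<forall>e\<in>A. (\<Sum>Y\<in>Q. lam' Y * of_bool (e \<in> Y)) = (\<Sum>Y\<in>\<Phi>. lam Y * of_bool (e \<in> Y))"
    using caratheodory_convex_comb[OF fA fP dual(1,2), of "\<lambda>Y e. of_bool (e \<in> Y)"] by blast
  have "(\<Sum>e\<in>A. ch e * (\<Sum>Y\<in>Q. lam' Y * of_bool (e \<in> Y)))
    = (\<Sum>e\<in>A. ch e * (\<Sum>Y\<in>\<Phi>. lam Y * of_bool (e \<in> Y)))"
    using same by (intro sum.cong) auto
  then show ?thesis using Q dual same by (intro exI[of _ Q] exI[of _ lam'] exI[of _ \<pi>] exI[of _ \<rho>]) auto
qed

section \<open>Position encoding of simple paths\<close>

text \<open>Position-indexed encoding of an \<open>s\<close>-\<open>t\<close> path with at most \<open>n\<close> vertices: \<open>u i v\<close> says that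
  \<open>v\<close> is the \<open>i\<close>-th vertex, \<open>a i e\<close> that \<open>e\<close> is the \<open>i\<close>-th arc and \<open>z e\<close> that \<open>e\<close> is on the
  path. Occupied positions form a prefix, no vertex repeats, and the last occupied vertex is \<open>t\<close>.\<close>
definition path_encoding :: "nat set \<Rightarrow> arc set \<Rightarrow> nat \<Rightarrow> nat \<Rightarrow> nat
    \<Rightarrow> (nat \<Rightarrow> nat \<Rightarrow> real) \<Rightarrow> (nat \<Rightarrow> arc \<Rightarrow> real) \<Rightarrow> (arc \<Rightarrow> real) \<Rightarrow> bool" where
  "path_encoding V A s t n u a z \<longleftrightarrow>
   (\<forall>i<n. \<forall>v\<in>V. u i v \<in> {0,1}) \<and> (\<forall>i. i+1<n \<longrightarrow> (\<forall>e\<in>A. a i e \<in> {0,1})) \<and> (\<forall>e\<in>A. z e \<in> {0,1})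
 \<and> (\<forall>i<n. (\<Sum>v\<in>V. u i v) \<le> 1)
 \<and> (\<forall>i. i+1<n \<longrightarrow> (\<Sum>v\<in>V. u (i+1) v) \<le> (\<Sum>v\<in>V. u i v))
 \<and> 1 \<le> u 0 s
 \<and> (\<forall>v\<in>V. (\<Sum>i<n. u i v) \<le> 1)
 \<and> 1 \<le> (\<Sum>i<n. u i t)
 \<and> (\<forall>i. i+1<n \<longrightarrow> u i t + (\<Sum>v\<in>V. u (i+1) v) \<le> 1)
 \<and> (\<forall>i. i+1<n \<longrightarrow> (\<forall>e\<in>A. a i e \<le> u i (fst e) \<and> a i e \<le> u (i+1) (snd e)))
 \<and> (\<forall>i. i+1<n \<longrightarrow> (\<forall>w\<in>V. u (i+1) w \<le> (\<Sum>e\<in>{e\<in>A. snd e = w}. a i e)))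
 \<and> (\<forall>e\<in>A. z e = (\<Sum>i<n-1. a i e))"

lemma sum_01_unique:
  fixes f :: "'a \<Rightarrow> real"
  assumes "finite S" "\<forall>x\<in>S. f x \<in> {0,1}" "sum f S \<le> 1" "x\<in>S" "y\<in>S" "f x = 1" "f y = 1"
  shows "x = y"
proof (rule ccontr)
  assume ne: "x \<noteq> y"
  have "sum f {x,y} \<le> sum f S" using assms by (intro sum_mono2) auto
  then show False using assms ne by simp
qed

lemma sum_01_obtain:
  fixes f :: "'a \<Rightarrow> real"
  assumes "finite S" "\<forall>x\<in>S. f x \<in> {0,1}" "1 \<le> sum f S"
  shows "\<exists>x\<in>S. f x = 1"
proof (rule ccontr)
  assume "\<not> ?thesis"
  then have "\<forall>x\<in>S. f x = 0" using assms(2) by auto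
  then show False using assms(3) by simp
qed

lemma sum_01_ge_1:
  fixes f :: "'a \<Rightarrow> real"
  assumes "finite S" "\<forall>x\<in>S. f x \<in> {0,1}" "x \<in> S" "f x = 1"
  shows "1 \<le> sum f S"
proof -
  have "sum f {x} \<le> sum f S" using assms by (intro sum_mono2) auto
  then show ?thesis using assms by simp
qed

lemma down_closed_eq_lessThan:
  assumes "finite S" "\<forall>i. Suc i \<in> S \<longrightarrow> i \<in> S"
  shows "S = {..<card S}"
proof (cases "S = {}")
  case True then show ?thesis by simp
next
  case False
  define M where "M = Max S"
  have MS: "M \<in> S" using assms False by (simp add: M_def)
  have le: "i \<le> M" if "i \<in> S" for i using assms that by (simp add: M_def)
  have down: "j - d \<in> S" if "j \<in> S" for j d
  proof (induction d)
    case 0 then show ?case using that by simp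
  next
    case (Suc d)
    show ?case
    proof (cases "d < j")
      case True
      then have "Suc (j - Suc d) = j - d" by simp
      then show ?thesis using Suc assms(2) by metis
    next
      case False then show ?thesis using Suc by simp
    qed
  qed
  have "S = {..M}"
  proof
    show "S \<subseteq> {..M}" using le by auto
    show "{..M} \<subseteq> S"
    proof
      fix i assume "i \<in> {..M}"
      then have "i = M - (M - i)" by simp
      then show "i \<in> S" using down[OF MS, of "M - i"] by simp
    qed
  qed
  then show ?thesis by (simp add: lessThan_Suc_atMost[symmetric])
qed

lemma set_zip_tl_conv_nth: "set (zip xs (tl xs)) = {(xs!i, xs!Suc i) | i. Suc i < length xs}"
  by (auto simp: set_zip nth_tl)

lemma occupied_rows_prefix:
  fixes u :: "nat \<Rightarrow> 'v \<Rightarrow> real"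
  assumes fV: "finite V" and bu: "\<forall>i<n. \<forall>v\<in>V. u i v \<in> {0,1}" and P1: "\<forall>i<n. (\<Sum>v\<in>V. u i v) \<le> 1"
    and P2: "\<forall>i. i+1<n \<longrightarrow> (\<Sum>v\<in>V. u (i+1) v) \<le> (\<Sum>v\<in>V. u i v)"
  obtains L where "L \<le> n" "\<And>i. i < n \<Longrightarrow> (\<exists>v\<in>V. u i v = 1) \<longleftrightarrow> i < L"
    "\<And>i. i < n \<Longrightarrow> (\<Sum>v\<in>V. u i v) = of_bool (i < L)"
proof -
  define occ where "occ i \<longleftrightarrow> i < n \<and> (\<exists>v\<in>V. u i v = 1)" for i
  have sumocc: "(\<Sum>v\<in>V. u i v) = of_bool (occ i)" if i: "i < n" for i
  proof (cases "occ i")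
    case True
    then obtain v where "v\<in>V" "u i v = 1" unfolding occ_def by auto
    then have "1 \<le> (\<Sum>v\<in>V. u i v)" using sum_01_ge_1[OF fV, of "u i"] bu i by auto
    then show ?thesis using P1 i True by auto
  next
    case False
    then have "\<forall>v\<in>V. u i v = 0" using bu i unfolding occ_def by auto
    then show ?thesis using False by simp
  qed
  have occ_down: "occ i" if "occ (Suc i)" for i
  proof -
    have i: "Suc i < n" using that unfolding occ_def by auto
    then have "1 \<le> (\<Sum>v\<in>V. u i v)" using P2 sumocc[OF i] that by auto
    then show ?thesis using sum_01_obtain[OF fV, of "u i"] bu i unfolding occ_def by auto
  qed
  define L where "L = card {i. occ i}"
  have "{i. occ i} = {..<L}"
  proof (unfold L_def, rule down_closed_eq_lessThan)
    show "finite {i. occ i}" unfolding occ_def by auto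
  qed (use occ_down in blast)
  then have occ_iff: "occ i \<longleftrightarrow> i < L" for i by blast
  have "\<not> occ n" unfolding occ_def by simp
  then have "L \<le> n" unfolding occ_iff by simp
  then show ?thesis using that occ_iff sumocc unfolding occ_def by auto
qed

lemma path_encoding_positions:
  assumes fV: "finite V" and sV: "s \<in> V" and tV: "t \<in> V" and n: "n = card V"
    and pc: "path_encoding V A s t n u a z"
  obtains L vt where "0 < L" "L \<le> n" "\<And>i v. i < n \<Longrightarrow> v \<in> V \<Longrightarrow> u i v = 1 \<longleftrightarrow> i < L \<and> v = vt i"
    "\<And>i. i < L \<Longrightarrow> vt i \<in> V" "vt 0 = s" "vt (L - 1) = t" "inj_on vt {..<L}"
proof -
  have bu: "\<forall>i<n. \<forall>v\<in>V. u i v \<in> {0,1}"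
    and P1: "\<forall>i<n. (\<Sum>v\<in>V. u i v) \<le> 1"
    and P2: "\<forall>i. i+1<n \<longrightarrow> (\<Sum>v\<in>V. u (i+1) v) \<le> (\<Sum>v\<in>V. u i v)"
    and P3: "1 \<le> u 0 s"
    and P4: "\<forall>v\<in>V. (\<Sum>i<n. u i v) \<le> 1"
    and P5: "1 \<le> (\<Sum>i<n. u i t)"
    and P6: "\<forall>i. i+1<n \<longrightarrow> u i t + (\<Sum>v\<in>V. u (i+1) v) \<le> 1"
    using pc unfolding path_encoding_def by blast+
  obtain L where Ln: "L \<le> n" and occ_iff: "\<And>i. i < n \<Longrightarrow> (\<exists>v\<in>V. u i v = 1) \<longleftrightarrow> i < L"
    and row: "\<And>i. i < n \<Longrightarrow> (\<Sum>v\<in>V. u i v) = of_bool (i < L)"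
    using occupied_rows_prefix[OF fV bu P1 P2] by blast
  have n0: "0 < n" using fV sV n card_gt_0_iff by blast
  have u0s: "u 0 s = 1" using P3 bu n0 sV by force
  have L0: "0 < L" using occ_iff[OF n0] u0s sV by auto
  define vt where "vt i = (THE v. v \<in> V \<and> u i v = 1)" for i
  have vt_eq: "vt i = v" if "i < n" "v \<in> V" "u i v = 1" for i v
    unfolding vt_def using sum_01_unique[OF fV, of "u i"] bu P1 that by (intro the_equality) auto
  have vt_prop: "vt i \<in> V \<and> u i (vt i) = 1" if "i < L" for i
    using occ_iff[of i] vt_eq that Ln by fastforce
  have u_iff: "u i v = 1 \<longleftrightarrow> i < L \<and> v = vt i" if "i < n" "v \<in> V" for i v
    using that vt_eq vt_prop occ_iff by blast
  have inj: "inj_on vt {..<L}"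
  proof (rule inj_onI)
    fix i j assume ij: "i \<in> {..<L}" "j \<in> {..<L}" "vt i = vt j"
    then have "i < n" "j < n" "u i (vt i) = 1" "u j (vt i) = 1" "vt i \<in> V"
      using vt_prop[of i] vt_prop[of j] Ln by auto
    then show "i = j" using sum_01_unique[of "{..<n}" "\<lambda>k. u k (vt i)" i j] bu P4 by auto
  qed
  obtain j where j: "j < n" "u j t = 1" using sum_01_obtain[of "{..<n}" "\<lambda>i. u i t"] P5 bu tV by auto
  have "j = L - 1"
  proof (rule ccontr)
    assume "j \<noteq> L - 1"
    then have sj: "Suc j < L" using j u_iff tV by fastforce
    then have "u j t + (\<Sum>v\<in>V. u (Suc j) v) \<le> 1" using P6 Ln by auto
    then show False using j row[of "Suc j"] sj Ln by simp
  qed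
  then have "vt (L - 1) = t" using vt_eq[OF j(1) tV j(2)] by simp
  moreover have "vt 0 = s" using vt_eq[OF n0 sV u0s] .
  ultimately show ?thesis using that L0 Ln u_iff vt_prop inj by blast
qed

lemma path_encoding_path:
  assumes fV: "finite V" and AV: "A \<subseteq> V \<times> V" and sV: "s \<in> V" and tV: "t \<in> V"
    and n: "n = card V" and pc: "path_encoding V A s t n u a z"
  shows "{e\<in>A. z e = 1} \<in> Paths A s t"
proof -
  obtain L vt where L: "0 < L" "L \<le> n" and u_iff: "\<And>i v. i < n \<Longrightarrow> v \<in> V \<Longrightarrow> u i v = 1 \<longleftrightarrow> i < L \<and> v = vt i"
    and vtV: "\<And>i. i < L \<Longrightarrow> vt i \<in> V" and ends: "vt 0 = s" "vt (L - 1) = t" and inj: "inj_on vt {..<L}"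
    using path_encoding_positions[OF fV sV tV n pc] by blast
  have bu: "\<forall>i<n. \<forall>v\<in>V. u i v \<in> {0,1}" and ba: "\<forall>i. i+1<n \<longrightarrow> (\<forall>e\<in>A. a i e \<in> {0,1})"
    and bz: "\<forall>e\<in>A. z e \<in> {0,1}"
    and P7: "\<forall>i. i+1<n \<longrightarrow> (\<forall>e\<in>A. a i e \<le> u i (fst e) \<and> a i e \<le> u (i+1) (snd e))"
    and P8: "\<forall>i. i+1<n \<longrightarrow> (\<forall>w\<in>V. u (i+1) w \<le> (\<Sum>e\<in>{e\<in>A. snd e = w}. a i e))"
    and P9: "\<forall>e\<in>A. z e = (\<Sum>i<n-1. a i e)"
    using pc unfolding path_encoding_def by blast+
  have fA: "finite A" using fV AV finite_subset[of A "V \<times> V"] by auto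
  define vs where "vs = map vt [0..<L]"
  have len: "length vs = L" and nth: "\<And>i. i < L \<Longrightarrow> vs ! i = vt i" unfolding vs_def by simp_all
  have aprop: "Suc i < L
    \<and> e = (vt i, vt (Suc i))" if i: "Suc i < n" and e: "e \<in> A" and ae: "a i e = 1" for i e
  proof -
    have fe: "fst e \<in> V" "snd e \<in> V" using e AV by auto
    have "a i e \<le> u i (fst e)" "a i e \<le> u (Suc i) (snd e)" using P7 i e by auto
    moreover have "u i (fst e) \<in> {0,1}" "u (Suc i) (snd e) \<in> {0,1}" using bu i fe by auto
    ultimately have "u i (fst e) = 1" "u (Suc i) (snd e) = 1" using ae by auto
    then show ?thesis using u_iff fe i by (metis Suc_lessD prod.collapse)
  qed
  have arc_ex: "(vt i, vt (Suc i)) \<in> A \<and> a i (vt i, vt (Suc i)) = 1" if sL: "Suc i < L" for i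
  proof -
    have sn: "Suc i < n" using sL L by auto
    have "u (Suc i) (vt (Suc i)) = 1" using u_iff[OF sn vtV[OF sL]] sL by simp
    then have "1 \<le> (\<Sum>e\<in>{e\<in>A. snd e = vt (Suc i)}. a i e)" using P8 sn vtV[OF sL] by force
    then obtain e where e: "e \<in> A" "a i e = 1"
      using sum_01_obtain[of "{e\<in>A. snd e = vt (Suc i)}" "a i"] ba sn fA by auto
    then show ?thesis using aprop[OF sn e] by auto
  qed
  have W: "walk_arcs vs = {(vt i, vt (Suc i)) | i. Suc i < L}"
    unfolding walk_arcs_def set_zip_tl_conv_nth len using nth by (auto; metis Suc_lessD)
  have WA: "walk_arcs vs \<subseteq> A" using W arc_ex by auto
  have zchar: "z e = 1 \<longleftrightarrow> e \<in> walk_arcs vs" if e: "e \<in> A" for e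
  proof
    assume "z e = 1"
    then have "1 \<le> (\<Sum>i<n-1. a i e)" using P9 e by auto
    then obtain i where "i < n - 1" "a i e = 1"
      using sum_01_obtain[of "{..<n-1}" "\<lambda>i. a i e"] ba e by auto
    then show "e \<in> walk_arcs vs" using aprop[of i e] e W by auto
  next
    assume "e \<in> walk_arcs vs"
    then obtain i where i: "Suc i < L" "e = (vt i, vt (Suc i))" using W by auto
    then have "a i e = 1" using arc_ex by auto
    moreover have "i < n - 1" using i L by auto
    ultimately have "1 \<le> (\<Sum>i<n-1. a i e)" using sum_01_ge_1[of "{..<n-1}" "\<lambda>i. a i e"] ba e by auto
    then show "z e = 1" using P9 bz e by force
  qed
  have "vs \<noteq> []" "hd vs = s" "last vs = t" "distinct vs"
    using L ends inj nth len by (auto simp: vs_def hd_map last_map distinct_map atLeast0LessThan)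
  then have "is_simple_path A s t vs" unfolding is_simple_path_def using WA by auto
  moreover have "{e\<in>A. z e = 1} = walk_arcs vs" using zchar WA by auto
  ultimately show ?thesis unfolding Paths_def by auto
qed

lemma simple_path_nth:
  assumes AV: "A \<subseteq> V \<times> V" and sV: "s \<in> V" and sp: "is_simple_path A s t vs"
  shows "walk_arcs vs = {(vs!i, vs!Suc i) | i. Suc i < length vs}"
    and "\<And>i. Suc i < length vs \<Longrightarrow> (vs!i, vs!Suc i) \<in> A"
    and "\<And>i. i < length vs \<Longrightarrow> vs ! i \<in> V"
proof -
  have ne: "vs \<noteq> []" and hd: "hd vs = s" and WA: "walk_arcs vs \<subseteq> A"
    using sp unfolding is_simple_path_def by auto
  show W: "walk_arcs vs = {(vs!i, vs!Suc i) | i. Suc i < length vs}"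
    unfolding walk_arcs_def set_zip_tl_conv_nth by simp
  show inA: "(vs!i, vs!Suc i) \<in> A" if "Suc i < length vs" for i using W WA that by auto
  show "vs ! i \<in> V" if "i < length vs" for i
  proof (cases i)
    case 0 then show ?thesis using hd ne sV by (simp add: hd_conv_nth)
  next
    case (Suc k) then show ?thesis using inA[of k] that AV by auto
  qed
qed

definition position_var :: "nat list \<Rightarrow> nat \<Rightarrow> nat \<Rightarrow> real" where
  "position_var vs i v = of_bool (i < length vs \<and> vs ! i = v)"

definition step_var :: "nat list \<Rightarrow> nat \<Rightarrow> arc \<Rightarrow> real" where
  "step_var vs i e = of_bool (Suc i < length vs \<and> e = (vs ! i, vs ! Suc i))"

lemma sum_position_var_vertices:
  assumes "finite V" "set vs \<subseteq> V"
  shows "(\<Sum>v\<in>V. position_var vs i v) = of_bool (i < length vs)"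
proof (cases "i < length vs")
  case True
  then have "vs ! i \<in> V" using assms(2) nth_mem by blast
  then show ?thesis using True assms(1) by (simp add: position_var_def of_bool_def)
qed (simp add: position_var_def)

lemma sum_position_var_positions:
  assumes "distinct vs" "length vs \<le> n"
  shows "(\<Sum>i<n. position_var vs i v) = of_bool (v \<in> set vs)"
proof (cases "v \<in> set vs")
  case True
  then obtain k where k: "k < length vs" "vs ! k = v" by (auto simp: in_set_conv_nth)
  have "position_var vs i v = of_bool (i = k)" for i
    using k assms(1) by (auto simp: position_var_def nth_eq_iff_index_eq)
  then show ?thesis using k assms(2) True by simp
qed (auto simp: position_var_def)

lemma sum_step_var_steps:
  assumes "distinct vs" "length vs \<le> n"
  shows "(\<Sum>i<n-1. step_var vs i e) = of_bool (e \<in> walk_arcs vs)"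
proof (cases "e \<in> walk_arcs vs")
  case True
  then obtain k where k: "Suc k < length vs" "e = (vs ! k, vs ! Suc k)"
    by (auto simp: walk_arcs_def set_zip_tl_conv_nth)
  have "step_var vs i e = of_bool (i = k)" for i
    using k assms(1) by (auto simp: step_var_def nth_eq_iff_index_eq)
  then show ?thesis using k assms(2) True by simp
next
  case False
  then have "step_var vs i e = 0" for i
    by (auto simp: step_var_def walk_arcs_def set_zip_tl_conv_nth)
  then show ?thesis using False by simp
qed

lemma path_encoding_exists:
  assumes fV: "finite V" and AV: "A \<subseteq> V \<times> V" and sV: "s \<in> V" and tV: "t \<in> V"
    and n: "n = card V" and X: "X \<in> Paths A s t"
  shows "\<exists>u a. path_encoding V A s t n u a (\<lambda>e. of_bool (e \<in> X))"
proof -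
  obtain vs where sp: "is_simple_path A s t vs" and Xw: "X = walk_arcs vs"
    using X unfolding Paths_def by auto
  have ne: "vs \<noteq> []" and hd: "vs ! 0 = s" and last: "vs ! (length vs - 1) = t" and dist: "distinct vs"
    using sp unfolding is_simple_path_def by (auto simp: hd_conv_nth last_conv_nth)
  have inA: "\<And>i. Suc i < length vs \<Longrightarrow> (vs!i, vs!Suc i) \<in> A"
    and vV: "set vs \<subseteq> V" using simple_path_nth[OF AV sV sp] by (auto simp: in_set_conv_nth)
  have Ln: "length vs \<le> n"
    using card_mono[OF fV vV] dist by (simp add: distinct_card n)
  note sums = sum_position_var_vertices[OF fV vV] sum_position_var_positions[OF dist Ln]
    sum_step_var_steps[OF dist Ln]
  have last_step: "position_var vs i t + (\<Sum>v\<in>V. position_var vs (i+1) v) \<le> 1" for i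
  proof (cases "i < length vs \<and> vs ! i = t")
    case True
    then have "i = length vs - 1" using last dist ne by (auto simp: nth_eq_iff_index_eq)
    then show ?thesis using sums(1)[of "i+1"] by (simp add: position_var_def)
  qed (use sums(1)[of "i+1"] in \<open>auto simp: position_var_def\<close>)
  have enter: "position_var vs (i+1) w \<le> (\<Sum>e\<in>{e\<in>A. snd e = w}. step_var vs i e)" for i w
  proof (cases "Suc i < length vs \<and> vs ! Suc i = w")
    case True
    have "finite A" using fV AV finite_subset[of A "V \<times> V"] by auto
    then have "step_var vs i (vs!i, vs!Suc i) \<le> (\<Sum>e\<in>{e\<in>A. snd e = w}. step_var vs i e)"
      using True inA by (intro member_le_sum) (auto simp: step_var_def)
    then show ?thesis using True by (simp add: step_var_def position_var_def)
  qed (auto simp: position_var_def step_var_def intro: sum_nonneg)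
  have "path_encoding V A s t n (position_var vs) (step_var vs) (\<lambda>e. of_bool (e \<in> X))"
    unfolding path_encoding_def Xw
    using sums last_step enter hd ne last vV
    by (auto simp: position_var_def step_var_def of_bool_def)
  then show ?thesis by blast
qed

lemma path_encoding_binary:
  "path_encoding V A s t n u a z \<Longrightarrow> (\<forall>i<n. \<forall>v\<in>V. u i v \<in> {0,1})
    \<and> (\<forall>i. i+1<n \<longrightarrow> (\<forall>e\<in>A. a i e \<in> {0,1})) \<and> (\<forall>e\<in>A. z e \<in> {0,1})"
  unfolding path_encoding_def by blast

section \<open>The robust objective and recovery distances\<close>

lemma Paths_subset: "Y \<in> Paths A s t \<Longrightarrow> Y \<subseteq> A"
  unfolding Paths_def is_simple_path_def by auto

lemma finite_Paths: "finite A \<Longrightarrow> finite (Paths A s t)"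
  by (meson Paths_subset PowI finite_Pow_iff finite_subset subsetI)

lemma Nbh_subset_Paths: "Nbh nb A s t X k \<subseteq> Paths A s t"
  unfolding Nbh_def by (cases nb) auto

lemma self_in_Nbh: "X \<in> Paths A s t \<Longrightarrow> X \<in> Nbh nb A s t X k"
  unfolding Nbh_def by (cases nb) auto

lemma finite_Nbh: "finite A \<Longrightarrow> finite (Nbh nb A s t X k)"
  by (rule finite_subset[OF Nbh_subset_Paths finite_Paths])

lemma nominal_in_Ucont: "\<forall>e\<in>A. 0 \<le> D e \<Longrightarrow> 0 \<le> G \<Longrightarrow> ch \<in> Ucont A ch D G"
  unfolding Ucont_def by auto

lemma rr_obj_min_cost:
  "rr_obj nb A s t k C ch D G X = (\<Sum>e\<in>X. C e) + (SUP c\<in>Ucont A ch D G. min_cost c (Nbh nb A s t X k))"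
  unfolding rr_obj_def min_cost_def ..

lemma rr_opt_le_rr_obj: "finite A \<Longrightarrow> X \<in> Paths A s t
    \<Longrightarrow> rr_opt nb A s t k C ch D G \<le> rr_obj nb A s t k C ch D G X"
  unfolding rr_opt_def using finite_Paths by (intro Min_le) auto

lemma rr_opt_attained:
  assumes "finite A" "Paths A s t \<noteq> {}"
  obtains X where "X \<in> Paths A s t" "rr_obj nb A s t k C ch D G X = rr_opt nb A s t k C ch D G"
proof -
  have "rr_opt nb A s t k C ch D G \<in> rr_obj nb A s t k C ch D G ` Paths A s t"
    unfolding rr_opt_def using finite_Paths assms by (intro Min_in) auto
  then show ?thesis using that by auto
qed

text \<open>The recovery distance of \<open>Y\<close> from \<open>X\<close> as a linear function of the incidence vectors
  \<open>x, y\<close> of \<open>X, Y\<close> and of \<open>w\<close>, which stands for the product \<open>x e * y e\<close>, i.e.\ the incidence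
  vector of \<open>X \<inter> Y\<close>.\<close>
definition nbh_dist :: "nbh \<Rightarrow> arc set \<Rightarrow> (arc \<Rightarrow> real) \<Rightarrow> (arc \<Rightarrow> real) \<Rightarrow> (arc \<Rightarrow> real) \<Rightarrow> real" where
  "nbh_dist nb A x y w = (case nb of
      Incl \<Rightarrow> (\<Sum>e\<in>A. y e - w e)
    | Excl \<Rightarrow> (\<Sum>e\<in>A. x e - w e)
    | Sym \<Rightarrow> (\<Sum>e\<in>A. x e + y e - 2 * w e))"

lemma nbh_dist_cong:
  "(\<And>e. e \<in> A \<Longrightarrow> x e = x' e \<and> y e = y' e \<and> w e = w' e) \<Longrightarrow> nbh_dist nb A x y w = nbh_dist nb A x' y' w'"
  unfolding nbh_dist_def by (cases nb) (auto intro!: sum.cong)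

lemma sum_of_bool_card: "finite A \<Longrightarrow> S \<subseteq> A \<Longrightarrow> (\<Sum>e\<in>A. of_bool (e \<in> S)) = real (card S)"
  using sum_of_bool_mult[of A S "\<lambda>_. 1"] by simp

lemma nbh_dist_of_bool_iff:
  assumes fA: "finite A" and X: "X \<subseteq> A" and Y: "Y \<in> Paths A s t"
  shows "nbh_dist nb A (\<lambda>e. of_bool (e \<in> X)) (\<lambda>e. of_bool (e \<in> Y)) (\<lambda>e. of_bool (e \<in> X \<inter> Y)) \<le> real k
    \<longleftrightarrow> Y \<in> Nbh nb A s t X k"
proof -
  have YA: "Y \<subseteq> A" using Paths_subset[OF Y] .
  have diff: "(\<Sum>e\<in>A. f e - g e) = real (card S)"
    if "\<And>e. f e - g e = of_bool (e \<in> S)" "S \<subseteq> A" for f g :: "arc \<Rightarrow> real" and S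
    using that sum_of_bool_card[OF fA] by simp
  have "(\<Sum>e\<in>A. of_bool (e \<in> Y) - of_bool (e \<in> X \<inter> Y)) = real (card (Y - X))"
    "(\<Sum>e\<in>A. of_bool (e \<in> X) - of_bool (e \<in> X \<inter> Y)) = real (card (X - Y))"
    "(\<Sum>e\<in>A. of_bool (e \<in> X) + of_bool (e \<in> Y) - 2 * of_bool (e \<in> X \<inter> Y))
      = real (card ((Y - X) \<union> (X - Y)))"
    using X YA by (auto intro!: diff)
  then show ?thesis using Y unfolding nbh_dist_def Nbh_def by (cases nb) auto
qed

section \<open>Linear expressions and indexing\<close>

type_synonym 'v lexpr = "(real \<times> 'v) list"
type_synonym 'v row = "'v lexpr \<times> real"

definition lexpr_eval :: "('v \<Rightarrow> real) \<Rightarrow> 'v lexpr \<Rightarrow> real" where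
  "lexpr_eval g E = sum_list (map (\<lambda>(c,w). c * g w) E)"

definition lexpr_coeff :: "'v lexpr \<Rightarrow> 'v \<Rightarrow> real" where
  "lexpr_coeff E w = sum_list (map (\<lambda>(c,w'). if w' = w then c else 0) E)"

definition lexpr_vars :: "'v lexpr \<Rightarrow> 'v set" where
  "lexpr_vars E = snd ` set E"

definition lexpr_neg :: "'v lexpr \<Rightarrow> 'v lexpr" where
  "lexpr_neg E = map (\<lambda>(c,w). (-c, w)) E"

definition le_row :: "'v lexpr \<Rightarrow> 'v lexpr \<Rightarrow> 'v row" where
  "le_row E1 E2 = (E1 @ lexpr_neg E2, 0)"

definition eq_rows :: "'v lexpr \<Rightarrow> 'v lexpr \<Rightarrow> 'v row list" where
  "eq_rows E1 E2 = [le_row E1 E2, le_row E2 E1]"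

definition sat_rows :: "('v \<Rightarrow> real) \<Rightarrow> 'v row list \<Rightarrow> bool" where
  "sat_rows g rs \<longleftrightarrow> (\<forall>r\<in>set rs. lexpr_eval g (fst r) \<le> snd r)"

lemma lexpr_eval_simps[simp]:
  "lexpr_eval g [] = 0"
  "lexpr_eval g ((c,w)#E) = c * g w + lexpr_eval g E"
  "lexpr_eval g (E1 @ E2) = lexpr_eval g E1 + lexpr_eval g E2"
  by (auto simp: lexpr_eval_def)

lemma lexpr_eval_neg[simp]: "lexpr_eval g (lexpr_neg E) = - lexpr_eval g E"
  by (induction E) (auto simp: lexpr_neg_def lexpr_eval_def)

lemma lexpr_eval_concat[simp]: "lexpr_eval g (concat (map F xs))
    = sum_list (map (\<lambda>x. lexpr_eval g (F x)) xs)"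
  by (induction xs) auto

lemma lexpr_eval_map[simp]: "lexpr_eval g (map (\<lambda>x. (c x, w x)) xs)
    = sum_list (map (\<lambda>x. c x * g (w x)) xs)"
  by (induction xs) auto

lemma lexpr_vars_simps[simp]:
  "lexpr_vars [] = {}"
  "lexpr_vars ((c,w)#E) = insert w (lexpr_vars E)"
  "lexpr_vars (E1 @ E2) = lexpr_vars E1 \<union> lexpr_vars E2"
  "lexpr_vars (lexpr_neg E) = lexpr_vars E"
  "lexpr_vars (map (\<lambda>x. (c' x, w' x)) xs) = w' ` set xs"
  "lexpr_vars (concat (map F xs)) = (\<Union>x\<in>set xs. lexpr_vars (F x))"
  by (auto simp: lexpr_vars_def lexpr_neg_def image_image case_prod_beta image_iff; force)+

lemma sat_rows_simps[simp]:
  "sat_rows g [] = True"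
  "sat_rows g (r # rs) \<longleftrightarrow> lexpr_eval g (fst r) \<le> snd r \<and> sat_rows g rs"
  "sat_rows g (rs1 @ rs2) \<longleftrightarrow> sat_rows g rs1 \<and> sat_rows g rs2"
  "sat_rows g (map f xs) \<longleftrightarrow> (\<forall>x\<in>set xs. lexpr_eval g (fst (f x)) \<le> snd (f x))"
  "sat_rows g (concat (map F xs)) \<longleftrightarrow> (\<forall>x\<in>set xs. sat_rows g (F x))"
  by (auto simp: sat_rows_def)

lemma lexpr_eval_cong: "(\<And>w. w \<in> lexpr_vars E \<Longrightarrow> g w = g' w) \<Longrightarrow> lexpr_eval g E = lexpr_eval g' E"
  by (induction E) (auto simp: lexpr_eval_def lexpr_vars_def)

definition list_pos :: "'a list \<Rightarrow> 'a \<Rightarrow> nat" where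
  "list_pos ws w = (THE i. i < length ws \<and> ws ! i = w)"

lemma list_pos_nth: "distinct ws \<Longrightarrow> i < length ws \<Longrightarrow> list_pos ws (ws ! i) = i"
  unfolding list_pos_def by (auto intro!: the_equality simp: nth_eq_iff_index_eq)

lemma nth_list_pos: "distinct ws \<Longrightarrow> w \<in> set ws \<Longrightarrow> list_pos ws w < length ws \<and> ws ! list_pos ws w = w"
  by (metis in_set_conv_nth list_pos_nth)

lemma sum_lexpr_coeff_nth:
  assumes d: "distinct ws" and sub: "lexpr_vars E \<subseteq> set ws"
  shows "(\<Sum>i<length ws. lexpr_coeff E (ws!i) * x i) = lexpr_eval (\<lambda>w. x (list_pos ws w)) E"
  using sub
proof (induction E)
  case Nil then show ?case by (simp add: lexpr_coeff_def)
next
  case (Cons cw E)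
  obtain c w where cw: "cw = (c,w)" by (cases cw)
  have wv: "w \<in> set ws" and sub': "lexpr_vars E \<subseteq> set ws" using Cons.prems cw by auto
  define k where "k = list_pos ws w"
  have k: "k < length ws" "ws!k = w" using nth_list_pos[OF d wv] unfolding k_def by auto
  have "(\<Sum>i<length ws. lexpr_coeff (cw#E) (ws!i) * x i)
      = (\<Sum>i<length ws. (if w = ws!i then c else 0) * x i) + (\<Sum>i<length ws. lexpr_coeff E (ws!i) * x i)"
    unfolding lexpr_coeff_def cw by (simp add: distrib_right sum.distrib)
  also have "(\<Sum>i<length ws. (if w = ws!i then c else 0) * x i) = (\<Sum>i<length ws. if i
    = k then c * x k else 0)"
    using k d by (intro sum.cong) (auto simp: nth_eq_iff_index_eq)
  also have "\<dots> = c * x k" using k by simp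
  finally show ?case using Cons.IH[OF sub'] cw k_def by simp
qed

lemma convex_comb_indexed:
  fixes lam :: "'a \<Rightarrow> real"
  assumes fQ: "finite Q" and cQ: "card Q < N"
  obtains Yj :: "nat \<Rightarrow> 'a" and lj :: "nat \<Rightarrow> real"
  where "\<And>j. Yj j \<in> insert Y0 Q" "\<And>j. lj j \<in> insert 0 (lam ` Q)"
    "\<And>h. (\<Sum>j\<in>{1..<N}. lj j * h (Yj j)) = (\<Sum>Y\<in>Q. lam Y * h Y)"
proof -
  obtain qs where qs: "distinct qs" "set qs = Q" using finite_distinct_list[OF fQ] by blast
  have len: "length qs < N" using cQ distinct_card[OF qs(1)] qs(2) by simp
  define Yj where "Yj j = (if j - 1 < length qs then qs ! (j - 1) else Y0)" for j
  define lj where "lj j = (if j - 1 < length qs then lam (qs ! (j - 1)) else 0)" for j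
  have "(\<Sum>j\<in>{1..<N}. lj j * h (Yj j)) = (\<Sum>Y\<in>Q. lam Y * h Y)" for h :: "'a \<Rightarrow> real"
  proof -
    have "(\<Sum>j\<in>{1..<N}. lj j * h (Yj j)) = (\<Sum>i\<in>{0..<N-1}. lj (Suc i) * h (Yj (Suc i)))"
      using sum.shift_bounds_Suc_ivl[of "\<lambda>j. lj j * h (Yj j)" 0 "N-1"] len by simp
    also have "\<dots> = (\<Sum>i\<in>{0..<N-1}. if i < length qs then lam (qs!i) * h (qs!i) else 0)"
      unfolding lj_def Yj_def by (rule sum.cong) auto
    also have "\<dots> = (\<Sum>i\<in>{0..<length qs}. lam (qs!i) * h (qs!i))"
      using len by (intro sum.mono_neutral_cong_right) auto
    also have "\<dots> = sum_list (map (\<lambda>Y. lam Y * h Y) qs)"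
      by (simp add: sum_list_sum_nth atLeast0LessThan)
    also have "\<dots> = (\<Sum>Y\<in>Q. lam Y * h Y)" using qs by (simp add: sum_list_distinct_conv_sum_set)
    finally show ?thesis .
  qed
  moreover have "Yj j \<in> insert Y0 Q" "lj j \<in> insert 0 (lam ` Q)" for j
    using qs unfolding Yj_def lj_def by auto
  ultimately show ?thesis using that by blast
qed

section \<open>The mixed integer program\<close>

text \<open>Copy \<open>0\<close> of the path variables encodes the first-stage
  path \<open>X\<close> and copies \<open>j = 1, \<dots>, m+1\<close> the support of a sparse dual solution; in the notation
  of \<open>worst_case_dual_sparse\<close>, \<open>Weight j\<close> is \<open>\<lambda>\<^sub>j\<close>, \<open>Common j e\<close> linearises
  \<open>x\<^sub>e y\<^sub>j\<^sub>e\<close>, \<open>WUse j e\<close> linearises \<open>\<lambda>\<^sub>j y\<^sub>j\<^sub>e\<close>, \<open>Freq e\<close> is \<open>\<Sum>\<^sub>j \<lambda>\<^sub>j y\<^sub>j\<^sub>e\<close>,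
  and \<open>Pi\<close>, \<open>Rho e\<close> are \<open>\<pi>\<close>, \<open>\<rho>\<^sub>e\<close>.\<close>
datatype mip_var = At nat nat nat | Step nat nat arc | Use nat arc | Common nat arc | Weight nat
  | WUse nat arc | Freq arc | Pi | Rho arc

fun int_var :: "mip_var \<Rightarrow> bool" where
  "int_var (At _ _ _) = True" | "int_var (Step _ _ _) = True" | "int_var (Use _ _)
    = True" | "int_var _ = False"

definition aff_const :: "real \<Rightarrow> aff" where
  "aff_const r = (r, \<lambda>_. 0, \<lambda>_. 0, \<lambda>_. 0, 0)"

lemma aff_eval_aff_const[simp]: "aff_eval A C ch D G (aff_const r) = r"
  by (simp add: aff_const_def)

fun obj_coeff :: "mip_var \<Rightarrow> aff" where
  "obj_coeff (Use 0 e) = (0, \<lambda>e'. of_bool (e' = e), \<lambda>_. 0, \<lambda>_. 0, 0)"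
| "obj_coeff (Freq e) = (0, \<lambda>_. 0, \<lambda>e'. of_bool (e' = e), \<lambda>_. 0, 0)"
| "obj_coeff Pi = (0, \<lambda>_. 0, \<lambda>_. 0, \<lambda>_. 0, 1)"
| "obj_coeff (Rho e) = (0, \<lambda>_. 0, \<lambda>_. 0, \<lambda>e'. of_bool (e' = e), 0)"
| "obj_coeff _ = aff_const 0"

definition product3 :: "'a list \<Rightarrow> 'b list \<Rightarrow> 'c list \<Rightarrow> ('a \<times> 'b \<times> 'c) list" where
  "product3 xs ys zs = List.product xs (List.product ys zs)"

lemma product3_simps[simp]:
  "set (product3 xs ys zs) = set xs \<times> set ys \<times> set zs"
  "length (product3 xs ys zs) = length xs * length ys * length zs"
  "distinct xs \<Longrightarrow> distinct ys \<Longrightarrow> distinct zs \<Longrightarrow> distinct (product3 xs ys zs)"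
  by (auto simp: product3_def distinct_product)

locale rr_mip =
  fixes V :: "nat set" and A :: "arc set" and s t k :: nat and nb :: nbh
  assumes finite_V: "finite V" and arcs_in_V: "A \<subseteq> V \<times> V" and s_in_V: "s \<in> V" and t_in_V: "t \<in> V"
    and Paths_nonempty: "Paths A s t \<noteq> {}"
begin

definition "n = card V"
definition "m = card A"
definition "ncopies = m + 2"
definition "vertex_list = sorted_list_of_set V"
definition "arc_list = (SOME l. set l = A \<and> distinct l)"
definition "copies = [0..<ncopies]"
definition "rec_copies = [1..<ncopies]"
definition "positions = [0..<n]"
definition "steps = [0..<n-1]"

lemma ncopies_gt[simp]: "0 < ncopies" "Suc 0 < ncopies" by (simp_all add: ncopies_def)

lemma n_pos[simp]: "0 < n" using finite_V s_in_V card_gt_0_iff n_def by auto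

lemma finite_A: "finite A" using finite_V arcs_in_V finite_subset[of A "V \<times> V"] by auto

lemma arc_list: "set arc_list = A" "distinct arc_list"
proof -
  have "\<exists>l. set l = A \<and> distinct l" using finite_A finite_distinct_list by auto
  then show "set arc_list = A" "distinct arc_list"
    unfolding arc_list_def by (metis (mono_tags, lifting) someI_ex)+
qed

lemma vertex_list: "set vertex_list = V" "distinct vertex_list"
    using finite_V by (auto simp: vertex_list_def)

lemma lengths: "length vertex_list = n" "length arc_list = m" "length copies = ncopies"
    "length rec_copies = m + 1" "length positions = n" "length steps = n - 1"
proof -
  show "length vertex_list = n" using vertex_list distinct_card[of vertex_list] by (simp add: n_def)
  show "length arc_list = m" using arc_list distinct_card[of arc_list] by (simp add: m_def)
  show "length copies = ncopies" "length positions = n" "length steps = n - 1"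
    by (simp_all add: copies_def positions_def steps_def)
  show "length rec_copies = m + 1" unfolding rec_copies_def ncopies_def by (simp only: length_upt)
qed

lemma sum_list_lists[simp]: "sum_list (map f vertex_list) = sum f V"
    "sum_list (map f2 arc_list) = sum f2 A"
  "sum_list (map f3 positions) = sum f3 {..<n}" "sum_list (map f4 steps) = sum f4 {..<n-1}"
  "sum_list (map f5 rec_copies) = sum f5 {1..<ncopies}"
    "sum_list (map f6 (filter P arc_list)) = sum f6 {e\<in>A. P e}"
  using vertex_list arc_list
    by (auto simp: sum_list_distinct_conv_sum_set positions_def steps_def rec_copies_def
    atLeast0LessThan)

lemma set_lists[simp]: "set vertex_list = V" "set arc_list = A" "set copies = {..<ncopies}"
    "set rec_copies = {1..<ncopies}" "set positions = {..<n}" "set steps = {..<n-1}"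
  using vertex_list arc_list by (auto simp: copies_def rec_copies_def positions_def steps_def)

lemma distinct_lists[simp]: "distinct vertex_list" "distinct arc_list" "distinct copies"
    "distinct rec_copies" "distinct positions" "distinct steps"
  using vertex_list arc_list by (auto simp: copies_def rec_copies_def positions_def steps_def)

definition var_list :: "mip_var list" where
  "var_list =
      map (\<lambda>(p,i,v). At p i v) (product3 copies positions vertex_list)
    @ map (\<lambda>(p,i,e). Step p i e) (product3 copies steps arc_list)
    @ map (\<lambda>(p,e). Use p e) (List.product copies arc_list)
    @ map (\<lambda>(j,e). Common j e) (List.product rec_copies arc_list)
    @ map Weight rec_copies
    @ map (\<lambda>(j,e). WUse j e) (List.product rec_copies arc_list)
    @ map Freq arc_list @ [Pi] @ map Rho arc_list"

lemma in_var_list: "w \<in> set var_list \<longleftrightarrow> (case w of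
      At p i v \<Rightarrow> p < ncopies \<and> i < n \<and> v \<in> V
    | Step p i e \<Rightarrow> p < ncopies \<and> i < n - 1 \<and> e \<in> A
    | Use p e \<Rightarrow> p < ncopies \<and> e \<in> A
    | Common j e \<Rightarrow> 1 \<le> j \<and> j < ncopies \<and> e \<in> A
    | Weight j \<Rightarrow> 1 \<le> j \<and> j < ncopies
    | WUse j e \<Rightarrow> 1 \<le> j \<and> j < ncopies \<and> e \<in> A
    | Freq e \<Rightarrow> e \<in> A | Pi \<Rightarrow> True | Rho e \<Rightarrow> e \<in> A)"
  by (cases w) (auto simp: var_list_def image_iff)

lemma distinct_var_list: "distinct var_list"
  unfolding var_list_def by (auto simp: distinct_map distinct_product inj_on_def)

lemma length_var_list: "length var_list = ncopies * n * n + ncopies * (n - 1) * m + ncopies * m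
    + (m+1) * m + (m+1) + (m+1) * m + m + 1 + m"
  unfolding var_list_def by (simp add: lengths)

definition sum_at :: "nat \<Rightarrow> nat \<Rightarrow> mip_var lexpr" where
  "sum_at p i = map (\<lambda>v. (1, At p i v)) vertex_list"

text \<open>The conjuncts of \<open>path_encoding\<close> for copy \<open>p\<close> as rows, binary conditions becoming
  bounds \<open>0 \<le> \<cdot> \<le> 1\<close> on integer variables.\<close>
definition path_rows :: "nat \<Rightarrow> mip_var row list" where
  "path_rows p =
      map (\<lambda>(i,v). ([(1, At p i v)], 1)) (List.product positions vertex_list)
    @ map (\<lambda>(i,v). ([(-1, At p i v)], 0)) (List.product positions vertex_list)
    @ map (\<lambda>(i,e). ([(1, Step p i e)], 1)) (List.product steps arc_list)
    @ map (\<lambda>(i,e). ([(-1, Step p i e)], 0)) (List.product steps arc_list)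
    @ map (\<lambda>e. ([(1, Use p e)], 1)) arc_list
    @ map (\<lambda>e. ([(-1, Use p e)], 0)) arc_list
    @ map (\<lambda>i. (sum_at p i, 1)) positions
    @ map (\<lambda>i. le_row (sum_at p (i+1)) (sum_at p i)) steps
    @ [([(-1, At p 0 s)], -1)]
    @ map (\<lambda>v. (map (\<lambda>i. (1, At p i v)) positions, 1)) vertex_list
    @ [(lexpr_neg (map (\<lambda>i. (1, At p i t)) positions), -1)]
    @ map (\<lambda>i. ((1, At p i t) # sum_at p (i+1), 1)) steps
    @ map (\<lambda>(i,e). le_row [(1, Step p i e)] [(1, At p i (fst e))]) (List.product steps arc_list)
    @ map (\<lambda>(i,e). le_row [(1, Step p i e)] [(1, At p (i+1) (snd e))]) (List.product steps arc_list)
    @ map (\<lambda>(i,w). le_row [(1, At p (i+1) w)]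
            (map (\<lambda>e. (1, Step p i e)) (filter (\<lambda>e. snd e = w) arc_list)))
        (List.product steps vertex_list)
    @ concat (map (\<lambda>e. eq_rows [(1, Use p e)] (map (\<lambda>i. (1, Step p i e)) steps)) arc_list)"

lemma sat_path_rows_iff:
  assumes ints: "\<forall>i<n. \<forall>v\<in>V. g (At p i v) \<in> \<int>" "\<forall>i<n-1. \<forall>e\<in>A. g (Step p i e) \<in> \<int>"
    "\<forall>e\<in>A. g (Use p e) \<in> \<int>"
  shows "sat_rows g (path_rows p)
    \<longleftrightarrow> path_encoding V A s t n (\<lambda>i v. g (At p i v)) (\<lambda>i e. g (Step p i e)) (\<lambda>e. g (Use p e))"
proof -
  have bin: "x \<in> {0, 1} \<longleftrightarrow> x \<le> 1 \<and> 0 \<le> x" if "x \<in> \<int>" for x :: real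
    using that by (auto elim!: Ints_cases)
  have "(\<forall>i<n. \<forall>v\<in>V. g (At p i v) \<in> {0,1})
      \<longleftrightarrow> (\<forall>i<n. \<forall>v\<in>V. g (At p i v) \<le> 1) \<and> (\<forall>i<n. \<forall>v\<in>V. 0 \<le> g (At p i v))"
    "(\<forall>i. i+1<n \<longrightarrow> (\<forall>e\<in>A. g (Step p i e) \<in> {0,1}))
      \<longleftrightarrow> (\<forall>i<n-1. \<forall>e\<in>A. g (Step p i e) \<le> 1) \<and> (\<forall>i<n-1. \<forall>e\<in>A. 0 \<le> g (Step p i e))"
    "(\<forall>e\<in>A. g (Use p e) \<in> {0,1}) \<longleftrightarrow> (\<forall>e\<in>A. g (Use p e) \<le> 1) \<and> (\<forall>e\<in>A. 0 \<le> g (Use p e))"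
    using ints bin by (auto simp: less_diff_conv)
  moreover have "(\<forall>e\<in>A. g (Use p e) = (\<Sum>i<n-1. g (Step p i e)))
      \<longleftrightarrow> (\<forall>e\<in>A. g (Use p e) \<le> (\<Sum>i<n-1. g (Step p i e))) \<and> (\<forall>e\<in>A. (\<Sum>i<n-1. g (Step p i e)) \<le> g (Use p e))"
    by (auto simp: order_eq_iff)
  ultimately show ?thesis
    unfolding path_rows_def path_encoding_def
    by (simp add: le_row_def eq_rows_def sum_at_def case_prod_beta Ball_def less_diff_conv
        imp_conjL imp_conjR all_conj_distrib del: One_nat_def)
qed

definition nbh_lexpr :: "nat \<Rightarrow> mip_var lexpr" where
  "nbh_lexpr j = (case nb of
      Incl \<Rightarrow> concat (map (\<lambda>e. [(1, Use j e), (-1, Common j e)]) arc_list)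
    | Excl \<Rightarrow> concat (map (\<lambda>e. [(1, Use 0 e), (-1, Common j e)]) arc_list)
    | Sym \<Rightarrow> concat (map (\<lambda>e. [(1, Use 0 e), (1, Use j e), (-2, Common j e)]) arc_list))"

lemma lexpr_eval_nbh_lexpr:
  "lexpr_eval g (nbh_lexpr j) = nbh_dist nb A (\<lambda>e. g (Use 0 e)) (\<lambda>e. g (Use j e)) (\<lambda>e. g (Common j e))"
  unfolding nbh_lexpr_def nbh_dist_def by (cases nb) (auto simp: algebra_simps)

definition recovery_rows :: "mip_var row list" where
  "recovery_rows =
      concat (map (\<lambda>(j,e).
        [le_row [(1, Common j e)] [(1, Use 0 e)], le_row [(1, Common j e)] [(1, Use j e)],
         ([(1, Use 0 e), (1, Use j e), (-1, Common j e)], 1), ([(-1, Common j e)], 0),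
         le_row [(1, WUse j e)] [(1, Weight j)], le_row [(1, WUse j e)] [(1, Use j e)],
         ([(1, Weight j), (1, Use j e), (-1, WUse j e)], 1), ([(-1, WUse j e)], 0)])
        (List.product rec_copies arc_list))
    @ map (\<lambda>j. (nbh_lexpr j, real k)) rec_copies
    @ map (\<lambda>j. ([(-1, Weight j)], 0)) rec_copies
    @ [(map (\<lambda>j. (1, Weight j)) rec_copies, 1), (lexpr_neg (map (\<lambda>j. (1, Weight j)) rec_copies), -1)]
    @ concat (map (\<lambda>e. eq_rows [(1, Freq e)] (map (\<lambda>j. (1, WUse j e)) rec_copies)) arc_list)
    @ [([(-1, Pi)], 0)]
    @ map (\<lambda>e. ([(-1, Rho e)], 0)) arc_list
    @ map (\<lambda>e. ([(1, Freq e), (-1, Pi), (-1, Rho e)], 0)) arc_list"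

definition recovery_constraints :: "(mip_var \<Rightarrow> real) \<Rightarrow> bool" where
  "recovery_constraints g \<longleftrightarrow>
    (\<forall>j\<in>{1..<ncopies}. \<forall>e\<in>A.
        g (Common j e) \<le> g (Use 0 e) \<and> g (Common j e) \<le> g (Use j e)
      \<and> g (Use 0 e) + g (Use j e) - 1 \<le> g (Common j e) \<and> 0 \<le> g (Common j e)
      \<and> g (WUse j e) \<le> g (Weight j) \<and> g (WUse j e) \<le> g (Use j e)
      \<and> g (Weight j) + g (Use j e) - 1 \<le> g (WUse j e) \<and> 0 \<le> g (WUse j e))
    \<and> (\<forall>j\<in>{1..<ncopies}.
        nbh_dist nb A (\<lambda>e. g (Use 0 e)) (\<lambda>e. g (Use j e)) (\<lambda>e. g (Common j e)) \<le> real k)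
    \<and> (\<forall>j\<in>{1..<ncopies}. 0 \<le> g (Weight j)) \<and> (\<Sum>j\<in>{1..<ncopies}. g (Weight j)) = 1
    \<and> (\<forall>e\<in>A. g (Freq e) = (\<Sum>j\<in>{1..<ncopies}. g (WUse j e)))
    \<and> 0 \<le> g Pi \<and> (\<forall>e\<in>A. 0 \<le> g (Rho e)) \<and> (\<forall>e\<in>A. g (Freq e) \<le> g Pi + g (Rho e))"

lemma sat_recovery_rows_iff: "sat_rows g recovery_rows \<longleftrightarrow> recovery_constraints g"
  unfolding recovery_rows_def recovery_constraints_def
  by (simp add: le_row_def eq_rows_def lexpr_eval_nbh_lexpr case_prod_beta ball_conj_distrib)
    (auto simp: algebra_simps order_eq_iff)

definition all_rows :: "mip_var row list" where
  "all_rows = concat (map path_rows copies) @ recovery_rows"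

definition int_constraints :: "(mip_var \<Rightarrow> real) \<Rightarrow> bool" where
  "int_constraints g \<longleftrightarrow> (\<forall>w\<in>set var_list. int_var w \<longrightarrow> g w \<in> \<int>)"

definition rows_feasible :: "(mip_var \<Rightarrow> real) \<Rightarrow> bool" where
  "rows_feasible g \<longleftrightarrow> int_constraints g \<and> sat_rows g all_rows"

definition encodes_solution :: "(mip_var \<Rightarrow> real) \<Rightarrow> bool" where
  "encodes_solution g \<longleftrightarrow> recovery_constraints g \<and> (\<forall>p<ncopies.
     path_encoding V A s t n (\<lambda>i v. g (At p i v)) (\<lambda>i e. g (Step p i e)) (\<lambda>e. g (Use p e)))"

lemma int_constraints_iff: "int_constraints g \<longleftrightarrow> (\<forall>p<ncopies. (\<forall>i<n. \<forall>v\<in>V. g (At p i v) \<in> \<int>)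
    \<and> (\<forall>i<n-1. \<forall>e\<in>A. g (Step p i e) \<in> \<int>) \<and> (\<forall>e\<in>A. g (Use p e) \<in> \<int>))"
proof
  assume "int_constraints g"
  then have I: "g w \<in> \<int>" if "w \<in> set var_list" "int_var w" for w
    using that unfolding int_constraints_def by blast
  show "\<forall>p<ncopies. (\<forall>i<n. \<forall>v\<in>V. g (At p i v) \<in> \<int>) \<and> (\<forall>i<n-1. \<forall>e\<in>A. g (Step p i e) \<in> \<int>)
    \<and> (\<forall>e\<in>A. g (Use p e) \<in> \<int>)"
  proof (intro allI impI conjI ballI)
    fix p i v assume "p < ncopies" "i < n" "v \<in> V" then show "g (At p i v) \<in> \<int>"
      using I[of "At p i v"] by (simp add: in_var_list)
  next
    fix p i e assume "p < ncopies" "i < n - 1" "e \<in> A" then show "g (Step p i e) \<in> \<int>"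
      using I[of "Step p i e"] by (simp add: in_var_list)
  next
    fix p e assume "p < ncopies" "e \<in> A" then show "g (Use p e) \<in> \<int>"
      using I[of "Use p e"] by (simp add: in_var_list)
  qed
next
  assume H: "\<forall>p<ncopies. (\<forall>i<n. \<forall>v\<in>V. g (At p i v) \<in> \<int>) \<and> (\<forall>i<n-1. \<forall>e\<in>A. g (Step p i e) \<in> \<int>)
    \<and> (\<forall>e\<in>A. g (Use p e) \<in> \<int>)"
  show "int_constraints g" unfolding int_constraints_def
  proof (intro ballI impI)
    fix w assume W: "w \<in> set var_list" "int_var w"
    note C = W(1)[unfolded in_var_list]
    show "g w \<in> \<int>" using C W(2) H by (cases w) auto
  qed
qed

lemma rows_feasible_iff: "rows_feasible g \<longleftrightarrow> encodes_solution g"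
proof
  assume F: "rows_feasible g"
  then have I: "int_constraints g" and S: "sat_rows g all_rows" unfolding rows_feasible_def by auto
  have "path_encoding V A s t n (\<lambda>i v. g (At p i v)) (\<lambda>i e. g (Step p i e)) (\<lambda>e. g (Use p e))" if
    p: "p < ncopies" for p
  proof -
    have "sat_rows g (path_rows p)" using S p unfolding all_rows_def by (auto simp: sat_rows_def)
    then show ?thesis using sat_path_rows_iff I p unfolding int_constraints_iff by blast
  qed
  moreover have "recovery_constraints g" using S sat_recovery_rows_iff unfolding all_rows_def by simp
  ultimately show "encodes_solution g" unfolding encodes_solution_def by blast
next
  assume H: "encodes_solution g"
  have P: "path_encoding V A s t n (\<lambda>i v. g (At p i v)) (\<lambda>i e. g (Step p i e)) (\<lambda>e. g (Use p e))"
    if "p < ncopies" for p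
    using H that unfolding encodes_solution_def by blast
  have I: "int_constraints g" unfolding int_constraints_iff
  proof (intro allI impI)
    fix p assume p: "p < ncopies"
    have int: "x \<in> {0, 1} \<Longrightarrow> x \<in> \<int>" for x :: real by auto
    show "(\<forall>i<n. \<forall>v\<in>V. g (At p i v) \<in> \<int>) \<and> (\<forall>i<n-1. \<forall>e\<in>A. g (Step p i e) \<in> \<int>)
        \<and> (\<forall>e\<in>A. g (Use p e) \<in> \<int>)"
      using path_encoding_binary[OF P[OF p]] int by (auto simp: less_diff_conv)
  qed
  have "sat_rows g (path_rows p)" if "p < ncopies" for p
    using sat_path_rows_iff[of g p] I P that unfolding int_constraints_iff by blast
  moreover have "sat_rows g recovery_rows"
    using H sat_recovery_rows_iff unfolding encodes_solution_def by simp
  ultimately show "rows_feasible g" unfolding rows_feasible_def all_rows_def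
    using I by (auto simp: sat_rows_def)
qed

definition var_index :: "mip_var \<Rightarrow> nat" where
  "var_index = list_pos var_list"

lemma var_index: "w \<in> set var_list \<Longrightarrow> var_index w < length var_list \<and> var_list ! var_index w = w"
  unfolding var_index_def using nth_list_pos[OF distinct_var_list] .

lemma var_index_nth: "i < length var_list \<Longrightarrow> var_index (var_list ! i) = i"
  unfolding var_index_def using list_pos_nth[OF distinct_var_list] .

definition obj_lexpr :: "(arc \<Rightarrow> real) \<Rightarrow> (arc \<Rightarrow> real) \<Rightarrow> (arc \<Rightarrow> real) \<Rightarrow> real \<Rightarrow> mip_var lexpr" where
  "obj_lexpr C ch D G = map (\<lambda>e. (C e, Use 0 e)) arc_list @ map (\<lambda>e. (ch e, Freq e)) arc_list
    @ [(G, Pi)] @ map (\<lambda>e. (D e, Rho e)) arc_list"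

definition obj_value :: "(arc \<Rightarrow> real) \<Rightarrow> (arc \<Rightarrow> real) \<Rightarrow> (arc \<Rightarrow> real) \<Rightarrow> real \<Rightarrow> (mip_var \<Rightarrow> real) \<Rightarrow> real"
  where "obj_value C ch D G g = (\<Sum>e\<in>A. C e * g (Use 0 e))
    + ((\<Sum>e\<in>A. ch e * g (Freq e)) + G * g Pi + (\<Sum>e\<in>A. D e * g (Rho e)))"

lemma lexpr_eval_obj_lexpr: "lexpr_eval g (obj_lexpr C ch D G) = obj_value C ch D G g"
  unfolding obj_lexpr_def obj_value_def by simp

lemma lexpr_coeff_map: "lexpr_coeff (map (\<lambda>x. (cn x, wn x)) xs) w = sum_list (map (\<lambda>x. if wn x
    = w then cn x else 0) xs)"
  unfolding lexpr_coeff_def by (simp add: comp_def)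

lemma lexpr_coeff_simps: "lexpr_coeff (E1 @ E2) w = lexpr_coeff E1 w + lexpr_coeff E2 w"
    "lexpr_coeff ((c,w')#E) w = (if w' = w then c else 0) + lexpr_coeff E w"
  "lexpr_coeff [] w = 0"
  unfolding lexpr_coeff_def by auto

lemma aff_eval_obj_coeff:
  assumes w: "w \<in> set var_list"
  shows "aff_eval A C ch D G (obj_coeff w) = lexpr_coeff (obj_lexpr C ch D G) w"
proof -
  have pick: "(\<Sum>e'\<in>A. if K e' = K e then f e' else 0) = f e"
    if "inj K" "e \<in> A" for K :: "arc \<Rightarrow> mip_var" and e and f :: "arc \<Rightarrow> real"
    using that finite_A by (simp add: inj_eq)
  have unit: "(\<Sum>e'\<in>A. of_bool (e' = e) * f e') = f e" if "e \<in> A" for e and f :: "arc \<Rightarrow> real"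
    using sum_of_bool_mult[OF finite_A, of "{e}" f] that by simp
  note defs = obj_lexpr_def lexpr_coeff_simps lexpr_coeff_map
  show ?thesis
  proof (cases w)
    case (Use p e)
    then have "e \<in> A" using w in_var_list by auto
    then show ?thesis using Use pick[of "Use 0" e C] unit[of e C] by (cases p) (simp_all add: defs inj_def)
  next
    case (Freq e)
    then have "e \<in> A" using w in_var_list by auto
    then show ?thesis using Freq pick[of Freq e ch] unit[of e ch] by (simp add: defs inj_def)
  next
    case (Rho e)
    then have "e \<in> A" using w in_var_list by auto
    then show ?thesis using Rho pick[of Rho e D] unit[of e D] by (simp add: defs inj_def)
  qed (simp_all add: defs)
qed

lemma lexpr_vars_obj: "lexpr_vars (obj_lexpr C ch D G) \<subseteq> set var_list"
  unfolding obj_lexpr_def by (auto simp: in_var_list)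

lemma arc_ends_in_V: "e \<in> A \<Longrightarrow> fst e \<in> V \<and> snd e \<in> V" using arcs_in_V by auto

lemma lexpr_vars_rows: "\<forall>c\<in>set all_rows. lexpr_vars (fst c) \<subseteq> set var_list"
proof -
  have p: "\<forall>c\<in>set (path_rows p). lexpr_vars (fst c) \<subseteq> set var_list" if "p < ncopies" for p
    using that s_in_V t_in_V arc_ends_in_V unfolding path_rows_def
    by (auto simp: in_var_list le_row_def eq_rows_def sum_at_def less_diff_conv)
  have r: "\<forall>c\<in>set recovery_rows. lexpr_vars (fst c) \<subseteq> set var_list"
    unfolding recovery_rows_def
      by (auto simp: in_var_list le_row_def eq_rows_def nbh_lexpr_def split: nbh.splits)
  show ?thesis unfolding all_rows_def using p r by auto
qed

definition template :: mip_template where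
  "template = \<lparr> tnvars = length var_list, tivars = {i. i < length var_list \<and> int_var (var_list!i)},
         tobj = (\<lambda>i. obj_coeff (var_list!i)),
         tcons = map (\<lambda>(E,b). ((\<lambda>i. aff_const (lexpr_coeff E (var_list!i))), aff_const b)) all_rows,
         tidx = (\<lambda>e. var_index (Use 0 e)) \<rparr>"

lemma template_wf_template: "template_wf A template"
  unfolding template_wf_def template_def
proof (simp, intro conjI)
  show "{i. i < length var_list \<and> int_var (var_list ! i)} \<subseteq> {..<length var_list}" by auto
  show "inj_on (\<lambda>e. var_index (Use 0 e)) A"
  proof (rule inj_onI)
    fix e e' assume "e \<in> A" "e' \<in> A" "var_index (Use 0 e) = var_index (Use 0 e')"
    then have "var_list ! var_index (Use 0 e) = var_list ! var_index (Use 0 e')" by simp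
    then show "e = e'" using var_index[of "Use 0 e"] var_index[of "Use 0 e'"] \<open>e \<in> A\<close> \<open>e' \<in> A\<close>
      by (simp add: in_var_list)
  qed
  show "\<forall>e\<in>A. var_index (Use 0 e) < length var_list" using var_index by (simp add: in_var_list)
qed

lemma mip_val_template: "mip_val (instantiate A template C ch D G) x
    = obj_value C ch D G (\<lambda>w. x (var_index w))"
proof -
  have "mip_val (instantiate A template C ch D G) x
    = (\<Sum>i<length var_list. lexpr_coeff (obj_lexpr C ch D G) (var_list!i) * x i)"
    unfolding mip_val_def instantiate_def template_def by (simp add: aff_eval_obj_coeff)
  also have "\<dots> = lexpr_eval (\<lambda>w. x (var_index w)) (obj_lexpr C ch D G)"
    unfolding var_index_def by (rule sum_lexpr_coeff_nth[OF distinct_var_list lexpr_vars_obj])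
  finally show ?thesis by (simp add: lexpr_eval_obj_lexpr)
qed

lemma mip_feasible_template: "mip_feasible (instantiate A template C ch D G) x
    \<longleftrightarrow> rows_feasible (\<lambda>w. x (var_index w))"
proof -
  have c: "(\<forall>(a, b)\<in>set (mcons (instantiate A template C ch D G)). (\<Sum>i<nvars (instantiate A
    template C ch D G). a i * x i) \<le> b)
     \<longleftrightarrow> sat_rows (\<lambda>w. x (var_index w)) all_rows"
  proof -
    have e: "(\<Sum>i<length var_list. lexpr_coeff E (var_list!i) * x i)
      = lexpr_eval (\<lambda>w. x (var_index w)) E" if "(E,b) \<in> set all_rows" for E b
      unfolding var_index_def
        using sum_lexpr_coeff_nth[OF distinct_var_list] lexpr_vars_rows that by fastforce
    show ?thesis unfolding instantiate_def template_def sat_rows_def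
      using e by (force simp: case_prod_beta)
  qed
  have i: "(\<forall>i\<in>ivars (instantiate A template C ch D G). x i \<in> \<int>)
    \<longleftrightarrow> int_constraints (\<lambda>w. x (var_index w))"
  proof
    assume H: "\<forall>i\<in>ivars (instantiate A template C ch D G). x i \<in> \<int>"
    show "int_constraints (\<lambda>w. x (var_index w))" unfolding int_constraints_def
    proof (intro ballI impI)
      fix w assume "w \<in> set var_list" "int_var w"
      then show "x (var_index w) \<in> \<int>"
        using H var_index[of w] unfolding instantiate_def template_def by auto
    qed
  next
    assume H: "int_constraints (\<lambda>w. x (var_index w))"
    show "\<forall>i\<in>ivars (instantiate A template C ch D G). x i \<in> \<int>" unfolding instantiate_def template_def
    proof (simp, intro allI impI)
      fix i assume "i < length var_list \<and> int_var (var_list!i)"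
      then show "x i \<in> \<int>" using H var_index_nth[of i] unfolding int_constraints_def by (metis nth_mem)
    qed
  qed
  show ?thesis unfolding mip_feasible_def rows_feasible_def using c i by blast
qed

lemma template_size_eq: "template_size template = length var_list + length all_rows"
  unfolding template_size_def template_def by simp

lemma rows_feasible_cong:
  assumes "\<forall>w\<in>set var_list. g w = g' w"
  shows "rows_feasible g = rows_feasible g'"
proof -
  have "lexpr_eval g (fst r) = lexpr_eval g' (fst r)" if "r \<in> set all_rows" for r
    using lexpr_vars_rows assms that by (intro lexpr_eval_cong) auto
  then have "sat_rows g all_rows = sat_rows g' all_rows"
    unfolding sat_rows_def by auto
  moreover have "int_constraints g = int_constraints g'" unfolding int_constraints_def
    using assms by auto
  ultimately show ?thesis unfolding rows_feasible_def by simp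
qed

lemma obj_value_cong: "\<forall>w\<in>set var_list. g w = g' w \<Longrightarrow> obj_value C ch D G g = obj_value C ch D G g'"
  using lexpr_eval_cong[of "obj_lexpr C ch D G" g g'] lexpr_vars_obj[of C ch D G]
  by (auto simp: lexpr_eval_obj_lexpr)

definition decoded_path :: "(mip_var \<Rightarrow> real) \<Rightarrow> nat \<Rightarrow> arc set" where
  "decoded_path g p = {e \<in> A. g (Use p e) = 1}"

lemma read_path_template: "read_path A template x = decoded_path (\<lambda>w. x (var_index w)) 0"
  unfolding read_path_def template_def decoded_path_def by simp

lemma decoded_path:
  assumes "encodes_solution g" "p < ncopies"
  shows "decoded_path g p \<in> Paths A s t" "\<And>e. e \<in> A \<Longrightarrow> g (Use p e) = of_bool (e \<in> decoded_path g p)"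
proof -
  have pc: "path_encoding V A s t n (\<lambda>i v. g (At p i v)) (\<lambda>i e. g (Step p i e)) (\<lambda>e. g (Use p e))"
    using assms unfolding encodes_solution_def by blast
  show "decoded_path g p \<in> Paths A s t"
    unfolding decoded_path_def
      by (rule path_encoding_path[OF finite_V arcs_in_V s_in_V t_in_V n_def pc])
  show "g (Use p e) = of_bool (e \<in> decoded_path g p)" if "e \<in> A" for e
    using path_encoding_binary[OF pc] that unfolding decoded_path_def by auto
qed

lemma decoded_products:
  assumes sol: "encodes_solution g" and j: "j \<in> {1..<ncopies}" and e: "e \<in> A"
  shows "g (Common j e) = of_bool (e \<in> decoded_path g 0 \<inter> decoded_path g j)"
    and "g (WUse j e) = g (Weight j) * of_bool (e \<in> decoded_path g j)"
proof -
  have "g (Common j e) \<le> g (Use 0 e)" "g (Common j e) \<le> g (Use j e)"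
    "g (Use 0 e) + g (Use j e) - 1 \<le> g (Common j e)" "0 \<le> g (Common j e)"
    "g (WUse j e) \<le> g (Weight j)" "g (WUse j e) \<le> g (Use j e)"
    "g (Weight j) + g (Use j e) - 1 \<le> g (WUse j e)" "0 \<le> g (WUse j e)"
    using sol j e unfolding encodes_solution_def recovery_constraints_def by auto
  moreover have "g (Use 0 e) = of_bool (e \<in> decoded_path g 0)"
    "g (Use j e) = of_bool (e \<in> decoded_path g j)"
    using decoded_path(2)[OF sol _ e] j by auto
  ultimately show "g (Common j e) = of_bool (e \<in> decoded_path g 0 \<inter> decoded_path g j)"
    and "g (WUse j e) = g (Weight j) * of_bool (e \<in> decoded_path g j)"
    by (auto simp: of_bool_def split: if_splits)
qed

lemma decoded_path_in_Nbh:
  assumes sol: "encodes_solution g" and j: "j \<in> {1..<ncopies}"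
  shows "decoded_path g j \<in> Nbh nb A s t (decoded_path g 0) k"
proof -
  let ?X = "decoded_path g 0" and ?Y = "decoded_path g j"
  have "nbh_dist nb A (\<lambda>e. g (Use 0 e)) (\<lambda>e. g (Use j e)) (\<lambda>e. g (Common j e)) \<le> real k"
    using sol j unfolding encodes_solution_def recovery_constraints_def by blast
  moreover have "nbh_dist nb A (\<lambda>e. g (Use 0 e)) (\<lambda>e. g (Use j e)) (\<lambda>e. g (Common j e))
      = nbh_dist nb A (\<lambda>e. of_bool (e \<in> ?X)) (\<lambda>e. of_bool (e \<in> ?Y)) (\<lambda>e. of_bool (e \<in> ?X \<inter> ?Y))"
    using decoded_path(2)[OF sol] decoded_products(1)[OF sol j] j by (intro nbh_dist_cong) auto
  moreover have "?X \<in> Paths A s t" "?Y \<in> Paths A s t" using decoded_path(1)[OF sol] j by auto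
  ultimately show ?thesis using nbh_dist_of_bool_iff[OF finite_A Paths_subset] by metis
qed

lemma rr_obj_le_obj_value:
  assumes sol: "encodes_solution g" and D: "\<forall>e\<in>A. 0 \<le> D e" and G: "0 \<le> G"
  shows "rr_obj nb A s t k C ch D G (decoded_path g 0) \<le> obj_value C ch D G g"
proof -
  let ?X = "decoded_path g 0" and ?J = "{1..<ncopies}"
  define \<Phi> where "\<Phi> = Nbh nb A s t ?X k"
  have rc: "\<forall>j\<in>?J. 0 \<le> g (Weight j)" "(\<Sum>j\<in>?J. g (Weight j)) = 1" "0 \<le> g Pi" "\<forall>e\<in>A. 0 \<le> g (Rho e)"
    "\<forall>e\<in>A. g (Freq e) = (\<Sum>j\<in>?J. g (WUse j e))" "\<forall>e\<in>A. g (Freq e) \<le> g Pi + g (Rho e)"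
    using sol unfolding encodes_solution_def recovery_constraints_def by auto
  have freq: "g (Freq e) = (\<Sum>j\<in>?J. g (Weight j) * of_bool (e \<in> decoded_path g j))" if "e \<in> A" for e
    using rc(5) decoded_products(2)[OF sol _ that] that by simp
  let ?dual = "(\<Sum>e\<in>A. ch e * g (Freq e)) + G * g Pi + (\<Sum>e\<in>A. D e * g (Rho e))"
  have "min_cost c \<Phi> \<le> ?dual" if c: "c \<in> Ucont A ch D G" for c
  proof -
    have "min_cost c \<Phi> \<le> (\<Sum>e\<in>A. ch e * (\<Sum>j\<in>?J. g (Weight j) * of_bool (e \<in> decoded_path g j)))
        + G * g Pi + (\<Sum>e\<in>A. D e * g (Rho e))"
    proof (rule min_cost_le_dual[OF finite_A _ _ _ _ rc(1-4) _ c])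
      show "finite \<Phi>" unfolding \<Phi>_def by (rule finite_Nbh[OF finite_A])
      show "\<forall>j\<in>?J. decoded_path g j \<in> \<Phi>" unfolding \<Phi>_def using decoded_path_in_Nbh[OF sol] by blast
      show "\<forall>Y\<in>\<Phi>. Y \<subseteq> A" unfolding \<Phi>_def using Nbh_subset_Paths Paths_subset by blast
      show "\<forall>e\<in>A. (\<Sum>j\<in>?J. g (Weight j) * of_bool (e \<in> decoded_path g j)) \<le> g Pi + g (Rho e)"
        using rc(6) freq by simp
    qed simp
    then show ?thesis using freq by simp
  qed
  then have "(SUP c\<in>Ucont A ch D G. min_cost c \<Phi>) \<le> ?dual"
    using nominal_in_Ucont[OF D G] by (intro cSUP_least) auto
  moreover have "(\<Sum>e\<in>?X. C e) = (\<Sum>e\<in>A. C e * g (Use 0 e))"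
    using decoded_path(2)[OF sol, of 0] sum_of_bool_mult[OF finite_A, of ?X C]
      Paths_subset[OF decoded_path(1)[OF sol, of 0]] by (simp add: mult.commute)
  ultimately show ?thesis unfolding rr_obj_min_cost \<Phi>_def obj_value_def by simp
qed

lemma encodes_solution_exists:
  assumes X: "X \<in> Paths A s t" and Y: "\<And>j. j \<in> {1..<ncopies} \<Longrightarrow> Y j \<in> Nbh nb A s t X k"
    and l: "\<And>j. 0 \<le> l j \<and> l j \<le> 1" and l1: "(\<Sum>j\<in>{1..<ncopies}. l j) = 1"
    and \<pi>: "0 \<le> \<pi>" and \<rho>: "\<forall>e\<in>A. 0 \<le> \<rho> e"
    and cov: "\<forall>e\<in>A. (\<Sum>j\<in>{1..<ncopies}. l j * of_bool (e \<in> Y j)) \<le> \<pi> + \<rho> e"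
  shows "\<exists>g. encodes_solution g \<and> obj_value C ch D G g = (\<Sum>e\<in>X. C e)
    + ((\<Sum>e\<in>A. ch e * (\<Sum>j\<in>{1..<ncopies}. l j * of_bool (e \<in> Y j))) + G * \<pi> + (\<Sum>e\<in>A. D e * \<rho> e))"
proof -
  define pth where "pth p = (if p = 0 then X else Y p)" for p
  have "\<exists>ua. path_encoding V A s t n (fst ua) (snd ua) (\<lambda>e. of_bool (e \<in> pth p))" if "p < ncopies" for p
  proof -
    have "pth p \<in> Paths A s t"
      using X Nbh_subset_Paths[THEN subsetD, OF Y[of p]] that unfolding pth_def by auto
    then show ?thesis using path_encoding_exists[OF finite_V arcs_in_V s_in_V t_in_V n_def] by fastforce
  qed
  then obtain PU where PU: "\<And>p. p < ncopies
    \<Longrightarrow> path_encoding V A s t n (fst (PU p)) (snd (PU p)) (\<lambda>e. of_bool (e \<in> pth p))"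
    by metis
  define g where "g w = (case w of At p i v \<Rightarrow> fst (PU p) i v | Step p i e \<Rightarrow> snd (PU p) i e
     | Use p e \<Rightarrow> of_bool (e \<in> pth p) | Common j e \<Rightarrow> of_bool (e \<in> X \<inter> Y j) | Weight j \<Rightarrow> l j
     | WUse j e \<Rightarrow> l j * of_bool (e \<in> Y j) | Freq e \<Rightarrow> (\<Sum>j\<in>{1..<ncopies}. l j * of_bool (e \<in> Y j))
     | Pi \<Rightarrow> \<pi> | Rho e \<Rightarrow> \<rho> e)" for w
  have paths: "path_encoding V A s t n (\<lambda>i v. g (At p i v)) (\<lambda>i e. g (Step p i e)) (\<lambda>e. g (Use p e))"
    if "p < ncopies" for p
    using PU[OF that] unfolding g_def by (simp add: case_prod_beta)
  have "nbh_dist nb A (\<lambda>e. g (Use 0 e)) (\<lambda>e. g (Use j e)) (\<lambda>e. g (Common j e)) \<le> real k"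
    if "j \<in> {1..<ncopies}" for j
  proof -
    have "nbh_dist nb A (\<lambda>e. g (Use 0 e)) (\<lambda>e. g (Use j e)) (\<lambda>e. g (Common j e))
        = nbh_dist nb A (\<lambda>e. of_bool (e \<in> X)) (\<lambda>e. of_bool (e \<in> Y j)) (\<lambda>e. of_bool (e \<in> X \<inter> Y j))"
      using that unfolding g_def pth_def by (intro nbh_dist_cong) auto
    then show ?thesis
      using nbh_dist_of_bool_iff[OF finite_A Paths_subset[OF X] Nbh_subset_Paths[THEN subsetD, OF
        Y]] Y that by simp
  qed
  moreover have "g (Common j e) \<le> g (Use 0 e) \<and> g (Common j e) \<le> g (Use j e)
      \<and> g (Use 0 e) + g (Use j e) - 1 \<le> g (Common j e) \<and> 0 \<le> g (Common j e)
      \<and> g (WUse j e) \<le> g (Weight j) \<and> g (WUse j e) \<le> g (Use j e)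
      \<and> g (Weight j) + g (Use j e) - 1 \<le> g (WUse j e) \<and> 0 \<le> g (WUse j e)" if "j \<in> {1..<ncopies}" for j e
    using that l[of j] unfolding g_def pth_def by (auto simp: of_bool_def)
  ultimately have "recovery_constraints g"
    unfolding recovery_constraints_def using l l1 \<pi> \<rho> cov unfolding g_def by auto
  moreover have "(\<Sum>e\<in>A. C e * g (Use 0 e)) = (\<Sum>e\<in>X. C e)"
    using sum_of_bool_mult[OF finite_A Paths_subset[OF X], of C] unfolding g_def pth_def
    by (simp add: mult.commute)
  ultimately show ?thesis
    using paths unfolding encodes_solution_def obj_value_def by (intro exI[of _ g]) (auto simp: g_def)
qed

text \<open>Strong duality: an optimal first-stage path together with a sparse optimal dual solution of
  its adversary problem is a solution of the formulation of value \<open>rr_opt\<close>.\<close>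
lemma obj_value_le_rr_opt:
  assumes nn: "\<forall>e\<in>A. 0 \<le> ch e \<and> 0 \<le> D e" and G0: "0 \<le> G"
  shows "\<exists>g. encodes_solution g \<and> obj_value C ch D G g \<le> rr_opt nb A s t k C ch D G"
proof -
  obtain X where X: "X \<in> Paths A s t" and Xopt: "rr_obj nb A s t k C ch D G X
    = rr_opt nb A s t k C ch D G"
    using rr_opt_attained[OF finite_A Paths_nonempty] by blast
  define \<Phi> where "\<Phi> = Nbh nb A s t X k"
  have fP: "finite \<Phi>" unfolding \<Phi>_def by (rule finite_Nbh[OF finite_A])
  have "\<Phi> \<noteq> {}" using self_in_Nbh[OF X] unfolding \<Phi>_def by blast
  moreover have "\<forall>Y\<in>\<Phi>. Y \<subseteq> A" unfolding \<Phi>_def by (meson Nbh_subset_Paths Paths_subset subsetD)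
  ultimately obtain Q lam \<pi> \<rho> where Q: "Q \<subseteq> \<Phi>" "card Q \<le> card A + 1" "\<forall>Y\<in>Q. 0 \<le> lam Y"
    "(\<Sum>Y\<in>Q. lam Y) = 1"
    "0 \<le> \<pi>" "\<forall>e\<in>A. 0 \<le> \<rho> e" "\<forall>e\<in>A. (\<Sum>Y\<in>Q. lam Y * of_bool (e \<in> Y)) \<le> \<pi> + \<rho> e"
    and dual: "(\<Sum>e\<in>A. ch e * (\<Sum>Y\<in>Q. lam Y * of_bool (e \<in> Y))) + G * \<pi> + (\<Sum>e\<in>A. D e * \<rho> e)
       \<le> (SUP c\<in>Ucont A ch D G. min_cost c \<Phi>)"
    using worst_case_dual_sparse[OF finite_A fP _ _ nn G0] by blast
  have fQ: "finite Q" using Q(1) fP by (rule finite_subset)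
  have "card Q < ncopies" using Q(2) unfolding ncopies_def m_def by simp
  then obtain Y l where Y: "\<And>j. Y j \<in> insert X Q" and l: "\<And>j. l j \<in> insert 0 (lam ` Q)"
    and comb: "\<And>h. (\<Sum>j\<in>{1..<ncopies}. l j * h (Y j)) = (\<Sum>Y\<in>Q. lam Y * h Y)"
    using convex_comb_indexed[OF fQ] by metis
  have "lam Y \<le> 1" if "Y \<in> Q" for Y
    using member_le_sum[OF that, of lam] Q(3,4) fQ by simp
  then have l01: "0 \<le> l j \<and> l j \<le> 1" for j using l[of j] Q(3) by auto
  have YN: "Y j \<in> Nbh nb A s t X k" for j using Y[of j] Q(1) self_in_Nbh[OF X] unfolding \<Phi>_def by auto
  have y_eq: "(\<Sum>j\<in>{1..<ncopies}. l j * of_bool (e \<in> Y j)) = (\<Sum>Y\<in>Q. lam Y * of_bool (e \<in> Y))" for e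
    by (rule comb)
  have l1: "(\<Sum>j\<in>{1..<ncopies}. l j) = 1" using comb[of "\<lambda>_. 1"] Q(4) by simp
  have "\<exists>g. encodes_solution g \<and> obj_value C ch D G g = (\<Sum>e\<in>X. C e)
      + ((\<Sum>e\<in>A. ch e * (\<Sum>j\<in>{1..<ncopies}. l j * of_bool (e \<in> Y j))) + G * \<pi> + (\<Sum>e\<in>A. D e * \<rho> e))"
  proof (rule encodes_solution_exists[OF X YN l01 l1 Q(5,6)])
    show "\<forall>e\<in>A. (\<Sum>j\<in>{1..<ncopies}. l j * of_bool (e \<in> Y j)) \<le> \<pi> + \<rho> e"
      unfolding y_eq by (rule Q(7))
  qed
  then obtain g where "encodes_solution g" and "obj_value C ch D G g = (\<Sum>e\<in>X. C e)
      + ((\<Sum>e\<in>A. ch e * (\<Sum>Y\<in>Q. lam Y * of_bool (e \<in> Y))) + G * \<pi> + (\<Sum>e\<in>A. D e * \<rho> e))"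
    unfolding y_eq by blast
  moreover have "(\<Sum>e\<in>X. C e) + (SUP c\<in>Ucont A ch D G. min_cost c \<Phi>) = rr_opt nb A s t k C ch D G"
    using Xopt unfolding rr_obj_min_cost \<Phi>_def by simp
  ultimately show ?thesis using dual by (intro exI[of _ g]) auto
qed

lemma length_path_rows: "length (path_rows p)
    = 2*n*n + 4*(n-1)*m + 4*m + n + (n-1) + 1 + n + 1 + (n-1) + (n-1)*n"
  unfolding path_rows_def
    by (simp add: lengths le_row_def eq_rows_def sum_at_def length_concat comp_def sum_list_triv)

lemma length_recovery_rows: "length recovery_rows = 8*((m+1)*m) + (m+1) + (m+1) + 2 + 2*m + 1 + m + m"
  unfolding recovery_rows_def
    by (simp add: lengths le_row_def eq_rows_def length_concat comp_def sum_list_triv case_prod_beta)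

lemma length_all_rows: "length all_rows
    = ncopies * (2*n*n + 4*(n-1)*m + 4*m + n + (n-1) + 1 + n + 1 + (n-1) + (n-1)*n)
    + (8*((m+1)*m) + (m+1) + (m+1) + 2 + 2*m + 1 + m + m)"
proof -
  have "length (concat (map path_rows copies))
    = sum_list (map (\<lambda>p. 2*n*n + 4*(n-1)*m + 4*m + n + (n-1) + 1 + n + 1 + (n-1) + (n-1)*n) copies)"
    by (simp add: length_concat comp_def length_path_rows)
  also have "\<dots> = ncopies * (2*n*n + 4*(n-1)*m + 4*m + n + (n-1) + 1 + n + 1 + (n-1) + (n-1)*n)"
    by (simp add: sum_list_triv lengths)
  finally show ?thesis unfolding all_rows_def by (simp add: length_recovery_rows)
qed

lemma size_polynomial_bound: "(m+2) * (2*n*n + 4*n*m + 4*m + n + n + 1 + n + 1 + n + n*n)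
    + (8*((m+1)*m) + (m+1) + (m+1) + 2 + 2*m + 1 + m + m)
   + ((m+2) * n * n + (m+2) * n * m + (m+2) * m + (m+1) * m + (m+1) + (m+1) * m + m + 1
     + m) \<le> 1000 * (n + m + 1)^3"
  by (simp add: power3_eq_cube algebra_simps)

lemma template_size_bound: "template_size template \<le> 1000 * (card V + card A + 1)^3"
proof -
  have rows: "length all_rows \<le> (m+2) * (2*n*n + 4*n*m + 4*m + n + n + 1 + n + 1 + n + n*n)
    + (8*((m+1)*m) + (m+1) + (m+1) + 2 + 2*m + 1 + m + m)"
    unfolding length_all_rows ncopies_def by (intro add_mono mult_le_mono order_refl) auto
  have vars: "length var_list \<le> (m+2) * n * n + (m+2) * n * m + (m+2) * m + (m+1) * m + (m+1)
    + (m+1) * m + m + 1 + m"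
    unfolding length_var_list ncopies_def by (intro add_mono mult_le_mono order_refl) auto
  show ?thesis unfolding template_size_eq n_def[symmetric] m_def[symmetric]
    using rows vars size_polynomial_bound by linarith
qed

lemma mip_feasible_decodes:
  assumes fy: "mip_feasible (instantiate A template C ch D G) y" and D: "\<forall>e\<in>A. 0 \<le> D e" and G: "0 \<le> G"
  shows "read_path A template y \<in> Paths A s t"
    and "rr_obj nb A s t k C ch D G (read_path A template y)
      \<le> mip_val (instantiate A template C ch D G) y"
proof -
  have sol: "encodes_solution (\<lambda>w. y (var_index w))"
    using fy mip_feasible_template rows_feasible_iff by blast
  show "read_path A template y \<in> Paths A s t"
    unfolding read_path_template using decoded_path(1)[OF sol] by simp
  show "rr_obj nb A s t k C ch D G (read_path A template y)
    \<le> mip_val (instantiate A template C ch D G) y"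
    unfolding read_path_template mip_val_template using rr_obj_le_obj_value[OF sol D G] .
qed

lemma mip_feasible_le_rr_opt:
  assumes "\<forall>e\<in>A. 0 \<le> ch e \<and> 0 \<le> D e" "0 \<le> G"
  obtains x where "mip_feasible (instantiate A template C ch D G) x"
    "mip_val (instantiate A template C ch D G) x \<le> rr_opt nb A s t k C ch D G"
proof -
  obtain g where g: "encodes_solution g" "obj_value C ch D G g \<le> rr_opt nb A s t k C ch D G"
    using obj_value_le_rr_opt[OF assms] by blast
  define x where "x i = g (var_list ! i)" for i
  have same: "\<forall>w\<in>set var_list. x (var_index w) = g w" unfolding x_def using var_index by auto
  show ?thesis
  proof
    show "mip_feasible (instantiate A template C ch D G) x"
      unfolding mip_feasible_template using rows_feasible_cong[OF same] rows_feasible_iff g(1) by simp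
    show "mip_val (instantiate A template C ch D G) x \<le> rr_opt nb A s t k C ch D G"
      unfolding mip_val_template using obj_value_cong[OF same] g(2) by simp
  qed
qed

lemma template_correct:
  assumes nn: "\<forall>e\<in>A. 0 \<le> C e \<and> 0 \<le> ch e \<and> 0 \<le> D e" and G0: "0 \<le> G"
  shows "let M = instantiate A template C ch D G in
             (\<exists>x. mip_optimal M x) \<and>
             (\<forall>x. mip_optimal M x \<longrightarrow>
                 mip_val M x = rr_opt nb A s t k C ch D G \<and>
                 read_path A template x \<in> Paths A s t \<and>
                 rr_obj nb A s t k C ch D G (read_path A template x) = rr_opt nb A s t k C ch D G)"
proof -
  define M where "M = instantiate A template C ch D G"
  define opt where "opt = rr_opt nb A s t k C ch D G"
  have lb: "read_path A template y \<in> Paths A s t"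
    "opt \<le> rr_obj nb A s t k C ch D G (read_path A template y)"
    "rr_obj nb A s t k C ch D G (read_path A template y) \<le> mip_val M y" if "mip_feasible M y" for y
    using mip_feasible_decodes[OF that[unfolded M_def]] nn G0 rr_opt_le_rr_obj[OF finite_A]
    unfolding M_def opt_def by auto
  obtain x0 where x0: "mip_feasible M x0" "mip_val M x0 \<le> opt"
    using mip_feasible_le_rr_opt nn G0 unfolding M_def opt_def by blast
  have "mip_optimal M x0" unfolding mip_optimal_def using x0 lb by force
  moreover have "mip_val M x = opt \<and> read_path A template x \<in> Paths A s t
      \<and> rr_obj nb A s t k C ch D G (read_path A template x) = opt" if "mip_optimal M x" for x
    using that x0 lb[of x] unfolding mip_optimal_def by force
  ultimately show ?thesis unfolding M_def opt_def Let_def by blast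
qed

theorem template_exists:
  "\<exists>T. template_size T \<le> 1000 * (card V + card A + 1) ^ 3 \<and> template_wf A T \<and>
       (\<forall>C ch D G. (\<forall>e\<in>A. 0 \<le> C e \<and> 0 \<le> ch e \<and> 0 \<le> D e) \<and> 0 \<le> G \<longrightarrow>
          (let M = instantiate A T C ch D G in
             (\<exists>x. mip_optimal M x) \<and>
             (\<forall>x. mip_optimal M x \<longrightarrow>
                 mip_val M x = rr_opt nb A s t k C ch D G \<and>
                 read_path A T x \<in> Paths A s t \<and>
                 rr_obj nb A s t k C ch D G (read_path A T x) = rr_opt nb A s t k C ch D G)))"
  using template_size_bound template_wf_template template_correct by blast

end

theorem mainTheorem15:
  "\<exists>(c::nat) (d::nat). \<forall>(V::nat set) (A::arc set) (s::nat) (t::nat) (k::nat) (nb::nbh).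
     finite V \<and> A \<subseteq> V \<times> V \<and> s \<in> V \<and> t \<in> V \<and> s \<noteq> t \<and> Paths A s t \<noteq> {} \<longrightarrow>
     (\<exists>T. template_size T \<le> c * (card V + card A + 1) ^ d \<and> template_wf A T \<and>
       (\<forall>C ch D G. (\<forall>e\<in>A. 0 \<le> C e \<and> 0 \<le> ch e \<and> 0 \<le> D e) \<and> 0 \<le> G \<longrightarrow>
          (let M = instantiate A T C ch D G in
             (\<exists>x. mip_optimal M x) \<and>
             (\<forall>x. mip_optimal M x \<longrightarrow>
                 mip_val M x = rr_opt nb A s t k C ch D G \<and>
                 read_path A T x \<in> Paths A s t \<and>
                 rr_obj nb A s t k C ch D G (read_path A T x) = rr_opt nb A s t k C ch D G))))"
  by (intro exI[of _ 1000] exI[of _ 3] allI impI rr_mip.template_exists rr_mip.intro) auto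

end
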